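(* There exists $C<\infty$ such that for every $N\ge1$ and every $(t,h)\in[0,\infty)^2$: \[ |\partial_t\bar F_N|+|\partial_h\bar F_N|\le C,\qquad |\partial_tF_N|\le C+\frac{C|W|}{\sqrt{Nt}},\qquad |\partial_hF_N|\le C+\frac{C|z|}{\sqrt{Nh}},\qquad \partial_h^2F_N\ge-\frac{C|z|}{N^{1/2}h^{3/2}}, \] all functions being evaluated at $(t,h)$.
   Context: Let $P$ be a probability measure on $\mathbb{R}$ with bounded support, and $P_N:=P^{\otimes N}$. Under a probability $\mathbb{P}$ (expectation $\mathbb{E}$), let $\bar x=(\bar x_1,\dots,\bar x_N)$ have i.i.d. entries of law $P$, let $W=(W_{ij})_{1\le i,j\le N}$ and $z=(z_i)_{1\le i\le N}$ be independent standard Gaussian variables, with $\bar x,W,z$ mutually independent. For $t,h\ge0$ and $x\in\mathbb{R}^N$ set \[ H_N(t,h,x):=\sqrt{\tfrac tN}\, x\cdot Wx+\tfrac tN (x\cdot\bar x)^2-\tfrac{t}{2N}|x|^4+\sqrt h\, z\cdot x+h\,x\cdot\bar x-\tfrac h2|x|^2, \] where $|x|$ is the Euclidean norm, $F_N(t,h):=\frac1N\log\int_{\mathbb{R}^N} e^{H_N(t,h,x)}\,dP_N(x)$ and $\bar F_N(t,h):=\mathbb{E}[F_N(t,h)]$. Also $|W|:=\sup\{|Wx|:x\in\mathbb{R}^N,|x|\le1\}$ is the operator norm. Bounds with a singular right side at $t=0$ or $h=0$ are understood as $+\infty$ there. *)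

theory Defs
  imports "HOL-Probability.Probability"
begin

text \<open>Vectors in R^N are represented as functions nat => real, only the
  coordinates 0..N-1 matter; matrices as nat => nat => real.\<close>

definition inner_N :: "nat \<Rightarrow> (nat \<Rightarrow> real) \<Rightarrow> (nat \<Rightarrow> real) \<Rightarrow> real" where
  "inner_N N x y = (\<Sum>i<N. x i * y i)"

definition norm_N :: "nat \<Rightarrow> (nat \<Rightarrow> real) \<Rightarrow> real" where
  "norm_N N x = sqrt (inner_N N x x)"

definition matvec_N :: "nat \<Rightarrow> (nat \<Rightarrow> nat \<Rightarrow> real) \<Rightarrow> (nat \<Rightarrow> real) \<Rightarrow> (nat \<Rightarrow> real)" where
  "matvec_N N W x = (\<lambda>i. \<Sum>j<N. W i j * x j)"

definition opnorm_N :: "nat \<Rightarrow> (nat \<Rightarrow> nat \<Rightarrow> real) \<Rightarrow> real" where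
  "opnorm_N N W = Sup {norm_N N (matvec_N N W x) | x. norm_N N x \<le> 1}"

definition gauss :: "real measure" where
  "gauss = density lborel (\<lambda>x. ennreal (std_normal_density x))"

definition H_N :: "nat \<Rightarrow> real \<Rightarrow> real \<Rightarrow> (nat \<Rightarrow> real) \<Rightarrow> (nat \<Rightarrow> nat \<Rightarrow> real)
    \<Rightarrow> (nat \<Rightarrow> real) \<Rightarrow> (nat \<Rightarrow> real) \<Rightarrow> real" where
  "H_N N t h xbar W z x =
     sqrt (t / N) * inner_N N x (matvec_N N W x)
     + t / N * (inner_N N x xbar)\<^sup>2
     - t / (2 * N) * (norm_N N x) ^ 4
     + sqrt h * inner_N N z x
     + h * inner_N N x xbar
     - h / 2 * (norm_N N x)\<^sup>2"

definition P_N :: "real measure \<Rightarrow> nat \<Rightarrow> (nat \<Rightarrow> real) measure" where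
  "P_N P N = PiM {..<N} (\<lambda>_. P)"

definition Omega :: "real measure \<Rightarrow> nat \<Rightarrow>
    ((nat \<Rightarrow> real) \<times> (nat \<Rightarrow> nat \<Rightarrow> real) \<times> (nat \<Rightarrow> real)) measure" where
  "Omega P N = P_N P N \<Otimes>\<^sub>M (PiM {..<N} (\<lambda>_. PiM {..<N} (\<lambda>_. gauss)) \<Otimes>\<^sub>M PiM {..<N} (\<lambda>_. gauss))"

definition F_N :: "real measure \<Rightarrow> nat \<Rightarrow> real \<Rightarrow> real \<Rightarrow>
    ((nat \<Rightarrow> real) \<times> (nat \<Rightarrow> nat \<Rightarrow> real) \<times> (nat \<Rightarrow> real)) \<Rightarrow> real" where
  "F_N P N t h \<omega> = (case \<omega> of (xbar, W, z) \<Rightarrow>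
     1 / N * ln (\<integral>x. exp (H_N N t h xbar W z x) \<partial>P_N P N))"

definition Fbar_N :: "real measure \<Rightarrow> nat \<Rightarrow> real \<Rightarrow> real \<Rightarrow> real" where
  "Fbar_N P N t h = (\<integral>\<omega>. F_N P N t h \<omega> \<partial>Omega P N)"

end

theory Submission
  imports Defs
begin

text \<open>For fixed disorder write \<open>H = sqrt s * A + s * B + R\<close>, where \<open>s = t\<close> and \<open>A = x \<bullet> W x / sqrt N\<close>,
  or \<open>s = h\<close> and \<open>A = z \<bullet> x\<close>. The log-partition function \<open>ln Z(u)\<close> of the weight
  \<open>exp (u A + u\<^sup>2 B + R)\<close> has derivative \<open>\<langle>A + 2 u B\<rangle>\<close> and second derivative
  \<open>Var (A + 2 u B) + 2 \<langle>B\<rangle>\<close>. As \<open>x\<close> is bounded, \<open>\<bar>\<langle>A\<rangle>\<bar>\<close> is at most a multiple of \<open>\<bar>W\<bar>\<close> or \<open>\<bar>z\<bar>\<close>,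
  which bounds \<open>d/ds ln Z(sqrt s) = \<langle>A + 2 sqrt s B\<rangle> / (2 sqrt s)\<close>; the nonnegative variance
  gives the lower bound on the second derivative in \<open>h\<close>.
  For the averaged free energy, \<open>A = \<Sum>k. G\<^sub>k \<phi>\<^sub>k\<close> is linear in independent standard Gaussians \<open>G\<^sub>k\<close>.
  Gaussian integration by parts in one coordinate (redrawing \<open>G\<^sub>k\<close> while freezing the rest) and
  the fact that \<open>\<langle>\<phi>\<^sub>k\<rangle>\<close> is \<open>c\<^sup>2 \<bar>u\<bar>\<close>-Lipschitz in \<open>G\<^sub>k\<close> give \<open>\<bar>E G\<^sub>k \<langle>\<phi>\<^sub>k\<rangle>\<bar> \<le> c\<^sup>2 \<bar>u\<bar>\<close>,
  so \<open>E d/du ln Z = O(u)\<close> and the \<open>s\<close>-derivative stays bounded, also at \<open>s = 0\<close>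
  (by l'Hopital, using the second derivative at \<open>u = 0\<close>).\<close>

section \<open>Differentiating parametric integrals\<close>

lemma LIMSEQ_integral_difference_quotient:
  fixes f f' :: "real \<Rightarrow> 'a \<Rightarrow> real"
  assumes Y: "\<And>n. Y n \<in> ball t e" "\<And>n. Y n \<noteq> t" "Y \<longlonglongrightarrow> t" and e: "0 < e"
    and int: "\<And>s. s \<in> ball t e \<Longrightarrow> integrable M (f s)"
    and meas': "f' t \<in> borel_measurable M"
    and der: "AE x in M. \<forall>s\<in>ball t e. ((\<lambda>s. f s x) has_real_derivative f' s x) (at s)"
    and g: "integrable M g"
    and bound: "AE x in M. \<forall>s\<in>ball t e. \<bar>f' s x\<bar> \<le> g x"
  shows "(\<lambda>n. ((\<integral>x. f (Y n) x \<partial>M) - (\<integral>x. f t x \<partial>M)) / (Y n - t)) \<longlonglongrightarrow> (\<integral>x. f' t x \<partial>M)"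
proof -
  have t: "t \<in> ball t e" using e by simp
  have Yat: "filterlim Y (at t) sequentially"
    using Y by (simp add: filterlim_at)
  have lim: "(\<lambda>n. \<integral>x. (f (Y n) x - f t x) / (Y n - t) \<partial>M) \<longlonglongrightarrow> (\<integral>x. f' t x \<partial>M)"
  proof (rule integral_dominated_convergence[where w=g])
    show "(\<lambda>x. (f (Y n) x - f t x) / (Y n - t)) \<in> borel_measurable M" for n
      using int[OF Y(1)] int[OF t] by measurable
    show "AE x in M. (\<lambda>n. (f (Y n) x - f t x) / (Y n - t)) \<longlonglongrightarrow> f' t x"
      using der
    proof eventually_elim
      case (elim x)
      then have "((\<lambda>s. (f s x - f t x) / (s - t)) \<longlongrightarrow> f' t x) (at t)"
        using t by (simp add: has_field_derivative_iff)
      from filterlim_compose[OF this Yat] show ?case by simp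
    qed
    show "AE x in M. norm ((f (Y n) x - f t x) / (Y n - t)) \<le> g x" for n
      using der bound
    proof eventually_elim
      case (elim x)
      have "norm (f (Y n) x - f t x) \<le> g x * norm (Y n - t)"
      proof (rule field_differentiable_bound[OF convex_ball _ _ Y(1) t])
        show "((\<lambda>s. f s x) has_real_derivative f' y x) (at y within ball t e)" if "y \<in> ball t e" for y
          using elim(1) that by (blast intro: has_field_derivative_at_within)
        show "norm (f' y x) \<le> g x" if "y \<in> ball t e" for y
          using elim(2) that by simp
      qed
      then show ?case using Y(2)[of n] by (simp add: abs_divide divide_le_eq)
    qed
  qed (use meas' g in auto)
  have eq: "(\<integral>x. (f (Y n) x - f t x) / (Y n - t) \<partial>M) =
      ((\<integral>x. f (Y n) x \<partial>M) - (\<integral>x. f t x \<partial>M)) / (Y n - t)" for n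
    using int[OF Y(1)] int[OF t] by simp
  from lim show ?thesis unfolding eq .
qed

lemma has_real_derivative_integral:
  fixes f f' :: "real \<Rightarrow> 'a \<Rightarrow> real"
  assumes e: "0 < e"
    and int: "\<And>s. s \<in> ball t e \<Longrightarrow> integrable M (f s)"
    and meas': "f' t \<in> borel_measurable M"
    and der: "AE x in M. \<forall>s\<in>ball t e. ((\<lambda>s. f s x) has_real_derivative f' s x) (at s)"
    and g: "integrable M g"
    and bound: "AE x in M. \<forall>s\<in>ball t e. \<bar>f' s x\<bar> \<le> g x"
  shows "((\<lambda>s. \<integral>x. f s x \<partial>M) has_real_derivative (\<integral>x. f' t x \<partial>M)) (at t)"
  unfolding has_field_derivative_iff
proof (subst tendsto_at_iff_sequentially, intro allI impI)
  fix X :: "nat \<Rightarrow> real"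
  assume X: "\<forall>i. X i \<in> UNIV - {t}" and Xt: "X \<longlonglongrightarrow> t"
  have "eventually (\<lambda>n. X n \<in> ball t e) sequentially"
    using Xt e by (simp add: tendsto_iff dist_commute)
  then obtain n0 where n0: "\<And>n. n \<ge> n0 \<Longrightarrow> X n \<in> ball t e"
    by (auto simp: eventually_sequentially)
  have "(\<lambda>n. ((\<integral>x. f (X (n + n0)) x \<partial>M) - (\<integral>x. f t x \<partial>M)) / (X (n + n0) - t)) \<longlonglongrightarrow> (\<integral>x. f' t x \<partial>M)"
    by (rule LIMSEQ_integral_difference_quotient[OF _ _ LIMSEQ_ignore_initial_segment[OF Xt] e int meas' der g bound])
      (use n0 X in auto)
  then show "((\<lambda>s. ((\<integral>x. f s x \<partial>M) - (\<integral>x. f t x \<partial>M)) / (s - t)) \<circ> X) \<longlonglongrightarrow> (\<integral>x. f' t x \<partial>M)"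
    unfolding comp_def by (rule LIMSEQ_offset)
qed

lemma (in prob_space) nonneg_if_AE_abs_le:
  fixes f :: "'a \<Rightarrow> real"
  assumes "AE x in M. \<bar>f x\<bar> \<le> c"
  shows "0 \<le> c"
proof (rule ccontr)
  assume c: "\<not> 0 \<le> c"
  have "AE x in M. False"
    using assms
  proof eventually_elim
    case (elim x)
    then show ?case using c abs_ge_zero[of "f x"] by linarith
  qed
  then show False using AE_False by simp
qed

lemma (in prob_space) abs_integral_le_if_AE_abs_le:
  fixes f :: "'a \<Rightarrow> real"
  assumes "AE x in M. \<bar>f x\<bar> \<le> c"
  shows "\<bar>\<integral>x. f x \<partial>M\<bar> \<le> c"
proof (cases "integrable M f")
  case True
  have "\<bar>\<integral>x. f x \<partial>M\<bar> \<le> (\<integral>x. \<bar>f x\<bar> \<partial>M)"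
    using integral_norm_bound[of M f] by simp
  also have "\<dots> \<le> (\<integral>x. c \<partial>M)"
    by (rule integral_mono_AE) (use True assms in auto)
  finally show ?thesis by (simp add: prob_space)
next
  case False
  then show ?thesis using nonneg_if_AE_abs_le[OF assms] by (simp add: not_integrable_integral_eq)
qed

lemma (in prob_space) integrable_if_AE_abs_le:
  fixes f :: "'a \<Rightarrow> real"
  assumes "f \<in> borel_measurable M" "AE x in M. \<bar>f x\<bar> \<le> c"
  shows "integrable M f"
  by (rule Bochner_Integration.integrable_bound[where f="\<lambda>_. c"]) (use assms in auto)

lemma square_le_if_abs_le: "\<bar>x::real\<bar> \<le> c \<Longrightarrow> x\<^sup>2 \<le> c\<^sup>2"
  using power_mono[of "\<bar>x\<bar>" c 2] by simp

lemma powr_three_halves: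
  assumes "0 < s"
  shows "s powr (3/2) = s * sqrt s"
proof -
  have "s powr (3/2) = s powr (1 + 1/2)" by simp
  also have "\<dots> = s * sqrt s" using assms by (simp only: powr_add powr_half_sqrt) simp
  finally show ?thesis .
qed

section \<open>Gibbs measures with a quadratic tilt\<close>

definition gibbs_weight :: "('x \<Rightarrow> real) \<Rightarrow> ('x \<Rightarrow> real) \<Rightarrow> ('x \<Rightarrow> real) \<Rightarrow> real \<Rightarrow> 'x \<Rightarrow> real" where
  "gibbs_weight A B R u x = exp (u * A x + u\<^sup>2 * B x + R x)"

definition partition_fn :: "'x measure \<Rightarrow> ('x \<Rightarrow> real) \<Rightarrow> ('x \<Rightarrow> real) \<Rightarrow> ('x \<Rightarrow> real) \<Rightarrow> real \<Rightarrow> real" where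
  "partition_fn M A B R u = (\<integral>x. gibbs_weight A B R u x \<partial>M)"

definition gibbs_avg :: "'x measure \<Rightarrow> ('x \<Rightarrow> real) \<Rightarrow> ('x \<Rightarrow> real) \<Rightarrow> ('x \<Rightarrow> real) \<Rightarrow> real \<Rightarrow>
    ('x \<Rightarrow> real) \<Rightarrow> real" where
  "gibbs_avg M A B R u f = (\<integral>x. f x * gibbs_weight A B R u x \<partial>M) / partition_fn M A B R u"

definition dlog_partition :: "'x measure \<Rightarrow> ('x \<Rightarrow> real) \<Rightarrow> ('x \<Rightarrow> real) \<Rightarrow> ('x \<Rightarrow> real) \<Rightarrow> real \<Rightarrow> real" where
  "dlog_partition M A B R u = gibbs_avg M A B R u A + 2 * u * gibbs_avg M A B R u B"

definition gibbs_var :: "'x measure \<Rightarrow> ('x \<Rightarrow> real) \<Rightarrow> ('x \<Rightarrow> real) \<Rightarrow> ('x \<Rightarrow> real) \<Rightarrow> real \<Rightarrow> real" where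
  "gibbs_var M A B R u = gibbs_avg M A B R u (\<lambda>x. (A x + 2 * u * B x)\<^sup>2)
     - (gibbs_avg M A B R u (\<lambda>x. A x + 2 * u * B x))\<^sup>2"

locale gibbs_family = prob_space M for M :: "'x measure" +
  fixes A B R :: "'x \<Rightarrow> real" and a b r :: real
  assumes A_measurable[measurable]: "A \<in> borel_measurable M"
    and B_measurable[measurable]: "B \<in> borel_measurable M"
    and R_measurable[measurable]: "R \<in> borel_measurable M"
    and A_bounded: "AE x in M. \<bar>A x\<bar> \<le> a"
    and B_bounded: "AE x in M. \<bar>B x\<bar> \<le> b"
    and R_bounded: "AE x in M. \<bar>R x\<bar> \<le> r"
begin

abbreviation "w \<equiv> gibbs_weight A B R"
abbreviation "Z \<equiv> partition_fn M A B R"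
abbreviation "avg \<equiv> gibbs_avg M A B R"
abbreviation "L \<equiv> dlog_partition M A B R"
abbreviation "V \<equiv> gibbs_var M A B R"

lemma a_nonneg: "0 \<le> a"
  using A_bounded by (rule nonneg_if_AE_abs_le)

lemma b_nonneg: "0 \<le> b"
  using B_bounded by (rule nonneg_if_AE_abs_le)

lemma weight_measurable[measurable]: "w u \<in> borel_measurable M"
  unfolding gibbs_weight_def by measurable

lemma weight_pos: "0 < w u x"
  unfolding gibbs_weight_def by simp

lemma weight_has_derivative: "((\<lambda>s. w s x) has_real_derivative (A x + 2 * s * B x) * w s x) (at s)"
  unfolding gibbs_weight_def by (auto intro!: derivative_eq_intros simp: algebra_simps power2_eq_square)

lemma abs_tilt_le:
  assumes "\<bar>A x\<bar> \<le> a" "\<bar>B x\<bar> \<le> b" "\<bar>s\<bar> \<le> U"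
  shows "\<bar>A x + 2 * s * B x\<bar> \<le> a + 2 * U * b"
proof -
  have "\<bar>s * B x\<bar> \<le> U * b"
    unfolding abs_mult by (rule mult_mono) (use assms abs_ge_zero[of s] in auto)
  then show ?thesis
    using assms(1) abs_triangle_ineq[of "A x" "2 * s * B x"] by (simp add: abs_mult)
qed

lemma weight_bounds:
  assumes "\<bar>A x\<bar> \<le> a" "\<bar>B x\<bar> \<le> b" "\<bar>R x\<bar> \<le> r" "\<bar>s\<bar> \<le> U"
  shows "w s x \<le> exp (U * a + U\<^sup>2 * b + r)" "exp (- (U * a + U\<^sup>2 * b + r)) \<le> w s x"
proof -
  have "\<bar>s * A x\<bar> \<le> U * a"
    unfolding abs_mult by (rule mult_mono) (use assms abs_ge_zero[of s] in auto)
  moreover have "\<bar>s\<^sup>2 * B x\<bar> \<le> U\<^sup>2 * b"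
    unfolding abs_mult
    by (rule mult_mono) (use assms power_mono[of "\<bar>s\<bar>" U 2] abs_ge_zero[of s] in auto)
  ultimately show "w s x \<le> exp (U * a + U\<^sup>2 * b + r)" "exp (- (U * a + U\<^sup>2 * b + r)) \<le> w s x"
    using assms(3) unfolding gibbs_weight_def by (simp_all add: abs_le_iff)
qed

lemma AE_weight_le: "AE x in M. w u x \<le> exp (\<bar>u\<bar> * a + u\<^sup>2 * b + r)"
  using A_bounded B_bounded R_bounded
  by eventually_elim (use weight_bounds(1)[of _ u "\<bar>u\<bar>"] in simp)

lemma AE_weight_ge: "AE x in M. exp (- (\<bar>u\<bar> * a + u\<^sup>2 * b + r)) \<le> w u x"
  using A_bounded B_bounded R_bounded
  by eventually_elim (use weight_bounds(2)[of _ u "\<bar>u\<bar>"] in simp)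

lemma integrable_times_weight:
  assumes "f \<in> borel_measurable M" "AE x in M. \<bar>f x\<bar> \<le> c"
  shows "integrable M (\<lambda>x. f x * w u x)"
proof (rule integrable_if_AE_abs_le)
  show "(\<lambda>x. f x * w u x) \<in> borel_measurable M" using assms(1) by measurable
  show "AE x in M. \<bar>f x * w u x\<bar> \<le> c * exp (\<bar>u\<bar> * a + u\<^sup>2 * b + r)"
    using assms(2) AE_weight_le[of u]
  proof eventually_elim
    case (elim x)
    then show ?case using weight_pos[of u x] by (simp add: abs_mult mult_mono')
  qed
qed

lemma integrable_weight: "integrable M (w u)"
  using integrable_times_weight[of "\<lambda>_. 1" 1 u] by simp

lemma partition_bounds:
  "exp (- (\<bar>u\<bar> * a + u\<^sup>2 * b + r)) \<le> Z u" "Z u \<le> exp (\<bar>u\<bar> * a + u\<^sup>2 * b + r)"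
  unfolding partition_fn_def
  using integral_mono_AE[OF _ integrable_weight AE_weight_ge[of u]]
    integral_mono_AE[OF integrable_weight _ AE_weight_le[of u]]
  by (simp_all add: prob_space)

lemma partition_pos: "0 < Z u"
  using partition_bounds(1)[of u] by (meson exp_gt_zero less_le_trans)

lemma abs_log_partition_le: "\<bar>ln (Z u)\<bar> \<le> \<bar>u\<bar> * a + u\<^sup>2 * b + r"
  using partition_bounds[of u] partition_pos[of u]
    ln_le_cancel_iff[of "Z u" "exp (\<bar>u\<bar> * a + u\<^sup>2 * b + r)"]
    ln_le_cancel_iff[of "exp (- (\<bar>u\<bar> * a + u\<^sup>2 * b + r))" "Z u"]
  by (simp add: abs_le_iff)

lemma abs_gibbs_avg_le:
  assumes "f \<in> borel_measurable M" "AE x in M. \<bar>f x\<bar> \<le> c"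
  shows "\<bar>avg u f\<bar> \<le> c"
proof -
  have "\<bar>\<integral>x. f x * w u x \<partial>M\<bar> \<le> \<integral>x. \<bar>f x * w u x\<bar> \<partial>M"
    using integral_norm_bound[of M "\<lambda>x. f x * w u x"] by simp
  also have "\<dots> \<le> \<integral>x. c * w u x \<partial>M"
  proof (rule integral_mono_AE)
    show "integrable M (\<lambda>x. c * w u x)" using integrable_weight by simp
    show "integrable M (\<lambda>x. \<bar>f x * w u x\<bar>)" using integrable_times_weight[OF assms] by simp
    show "AE x in M. \<bar>f x * w u x\<bar> \<le> c * w u x"
      using assms(2) by eventually_elim (simp add: abs_mult weight_pos less_imp_le mult_right_mono)
  qed
  also have "\<dots> = c * Z u" unfolding partition_fn_def by simp
  finally show ?thesis
    unfolding gibbs_avg_def using partition_pos[of u] by (simp add: abs_divide divide_le_eq)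
qed

lemma gibbs_avg_linear:
  assumes [measurable]: "f \<in> borel_measurable M" "g \<in> borel_measurable M"
    and "AE x in M. \<bar>f x\<bar> \<le> c" "AE x in M. \<bar>g x\<bar> \<le> d"
  shows "avg u (\<lambda>x. f x + k * g x) = avg u f + k * avg u g"
proof -
  have "(\<integral>x. (f x + k * g x) * w u x \<partial>M) = (\<integral>x. f x * w u x + k * (g x * w u x) \<partial>M)"
    by (simp add: algebra_simps)
  also have "\<dots> = (\<integral>x. f x * w u x \<partial>M) + k * (\<integral>x. g x * w u x \<partial>M)"
    using integrable_times_weight[OF assms(1,3)] integrable_times_weight[OF assms(2,4)] by simp
  finally show ?thesis unfolding gibbs_avg_def by (simp add: add_divide_distrib)
qed

lemma AE_abs_tilt_le: "AE x in M. \<bar>A x + 2 * u * B x\<bar> \<le> a + 2 * \<bar>u\<bar> * b"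
  using A_bounded B_bounded by eventually_elim (rule abs_tilt_le, auto)

lemma gibbs_var_bounds: "0 \<le> V u" "V u \<le> (a + 2 * \<bar>u\<bar> * b)\<^sup>2"
proof -
  define f where "f x = A x + 2 * u * B x" for x
  define m where "m = avg u f"
  define c where "c = a + 2 * \<bar>u\<bar> * b"
  have [measurable]: "f \<in> borel_measurable M" unfolding f_def by measurable
  have bf: "AE x in M. \<bar>f x\<bar> \<le> c" unfolding f_def c_def by (rule AE_abs_tilt_le)
  have bf2: "AE x in M. \<bar>(f x)\<^sup>2\<bar> \<le> c\<^sup>2"
    using bf by eventually_elim (simp add: square_le_if_abs_le)
  have "0 \<le> (\<integral>x. (f x - m)\<^sup>2 * w u x \<partial>M)"
    by (rule integral_nonneg_AE) (simp add: weight_pos less_imp_le)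
  also have "(\<integral>x. (f x - m)\<^sup>2 * w u x \<partial>M) =
      (\<integral>x. (f x)\<^sup>2 * w u x + (-2 * m) * (f x * w u x) + m\<^sup>2 * w u x \<partial>M)"
    by (simp add: power2_eq_square algebra_simps)
  also have "\<dots> = (\<integral>x. (f x)\<^sup>2 * w u x \<partial>M) + (-2 * m) * (\<integral>x. f x * w u x \<partial>M) + m\<^sup>2 * Z u"
    using integrable_times_weight[OF _ bf2] integrable_times_weight[OF _ bf] integrable_weight[of u]
    unfolding partition_fn_def by simp
  also have "\<dots> = Z u * V u"
    using partition_pos[of u] unfolding gibbs_var_def gibbs_avg_def m_def f_def
    by (simp add: field_simps power2_eq_square)
  finally show "0 \<le> V u" using partition_pos[of u] by (simp add: zero_le_mult_iff)
  have "avg u (\<lambda>x. (f x)\<^sup>2) \<le> c\<^sup>2"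
    using abs_gibbs_avg_le[OF _ bf2] by (simp add: abs_le_iff)
  then show "V u \<le> (a + 2 * \<bar>u\<bar> * b)\<^sup>2"
    unfolding gibbs_var_def f_def c_def using zero_le_power2[of "avg u (\<lambda>x. A x + 2 * u * B x)"]
    by linarith
qed

lemma abs_weighted_derivative_le:
  assumes "\<bar>A x\<bar> \<le> a" "\<bar>B x\<bar> \<le> b" "\<bar>R x\<bar> \<le> r" "\<bar>s\<bar> \<le> U"
    and "\<bar>p\<bar> \<le> c" "\<bar>p'\<bar> \<le> c"
  shows "\<bar>(p' + p * (A x + 2 * s * B x)) * w s x\<bar> \<le> (c + c * (a + 2 * U * b)) * exp (U * a + U\<^sup>2 * b + r)"
proof -
  have "\<bar>p * (A x + 2 * s * B x)\<bar> \<le> c * (a + 2 * U * b)"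
    unfolding abs_mult by (rule mult_mono) (use assms abs_tilt_le[OF assms(1,2,4)] abs_ge_zero[of p] in auto)
  then have "\<bar>p' + p * (A x + 2 * s * B x)\<bar> \<le> c + c * (a + 2 * U * b)"
    using assms(6) abs_triangle_ineq[of p' "p * (A x + 2 * s * B x)"] by linarith
  moreover have "w s x \<le> exp (U * a + U\<^sup>2 * b + r)" by (rule weight_bounds(1)[OF assms(1-4)])
  ultimately show ?thesis using weight_pos[of s x] by (simp add: abs_mult mult_mono')
qed

lemma weighted_integral_has_derivative:
  fixes p p' :: "real \<Rightarrow> 'x \<Rightarrow> real"
  assumes [measurable]: "\<And>s. p s \<in> borel_measurable M" "\<And>s. p' s \<in> borel_measurable M"
    and deriv: "\<And>x s. ((\<lambda>s. p s x) has_real_derivative p' s x) (at s)"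
    and bounded: "\<And>U. \<exists>c. AE x in M. \<forall>s. \<bar>s\<bar> \<le> U \<longrightarrow> \<bar>p s x\<bar> \<le> c \<and> \<bar>p' s x\<bar> \<le> c"
  shows "((\<lambda>s. \<integral>x. p s x * w s x \<partial>M) has_real_derivative
      (\<integral>x. (p' t x + p t x * (A x + 2 * t * B x)) * w t x \<partial>M)) (at t)"
proof -
  define U where "U = \<bar>t\<bar> + 1"
  obtain c where c: "AE x in M. \<forall>s. \<bar>s\<bar> \<le> U \<longrightarrow> \<bar>p s x\<bar> \<le> c \<and> \<bar>p' s x\<bar> \<le> c"
    using bounded by blast
  have int: "integrable M (\<lambda>x. p s x * w s x)" for s
  proof -
    obtain c' where "AE x in M. \<forall>s'. \<bar>s'\<bar> \<le> \<bar>s\<bar> \<longrightarrow> \<bar>p s' x\<bar> \<le> c' \<and> \<bar>p' s' x\<bar> \<le> c'"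
      using bounded by blast
    then have "AE x in M. \<bar>p s x\<bar> \<le> c'" by eventually_elim blast
    then show ?thesis by (intro integrable_times_weight) simp_all
  qed
  have der: "AE x in M. \<forall>s\<in>ball t 1. ((\<lambda>s. p s x * w s x) has_real_derivative
      (p' s x + p s x * (A x + 2 * s * B x)) * w s x) (at s)"
    by (auto intro!: derivative_eq_intros deriv weight_has_derivative simp: algebra_simps)
  have bnd: "AE x in M. \<forall>s\<in>ball t 1. \<bar>(p' s x + p s x * (A x + 2 * s * B x)) * w s x\<bar>
      \<le> (c + c * (a + 2 * U * b)) * exp (U * a + U\<^sup>2 * b + r)"
    using c A_bounded B_bounded R_bounded
  proof eventually_elim
    case (elim x)
    show ?case
    proof
      fix s assume "s \<in> ball t 1"
      then have s: "\<bar>s\<bar> \<le> U" by (auto simp: U_def dist_real_def)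
      then show "\<bar>(p' s x + p s x * (A x + 2 * s * B x)) * w s x\<bar>
          \<le> (c + c * (a + 2 * U * b)) * exp (U * a + U\<^sup>2 * b + r)"
        using elim(1) by (intro abs_weighted_derivative_le[OF elim(2-4) s]) blast+
    qed
  qed
  show ?thesis
  proof (rule has_real_derivative_integral[where e=1])
    show "(\<lambda>x. (p' t x + p t x * (A x + 2 * t * B x)) * w t x) \<in> borel_measurable M"
      by measurable
  qed (use int der bnd in auto)
qed

definition "Z' u = (\<integral>x. (A x + 2 * u * B x) * w u x \<partial>M)"
definition "Z'' u = (\<integral>x. ((A x + 2 * u * B x)\<^sup>2 + 2 * B x) * w u x \<partial>M)"

lemma partition_has_derivative: "(Z has_real_derivative Z' t) (at t)"
proof -
  have "((\<lambda>s. \<integral>x. 1 * w s x \<partial>M) has_real_derivative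
      (\<integral>x. (0 + 1 * (A x + 2 * t * B x)) * w t x \<partial>M)) (at t)"
    by (rule weighted_integral_has_derivative) (auto intro: exI[of _ 1])
  then show ?thesis unfolding partition_fn_def Z'_def by simp
qed

lemma partition'_has_derivative: "(Z' has_real_derivative Z'' t) (at t)"
proof -
  have "((\<lambda>s. \<integral>x. (A x + 2 * s * B x) * w s x \<partial>M) has_real_derivative
      (\<integral>x. (2 * B x + (A x + 2 * t * B x) * (A x + 2 * t * B x)) * w t x \<partial>M)) (at t)"
  proof (rule weighted_integral_has_derivative)
    show "((\<lambda>s. A x + 2 * s * B x) has_real_derivative 2 * B x) (at s)" for x s
      by (auto intro!: derivative_eq_intros)
    show "\<exists>c. AE x in M. \<forall>s. \<bar>s\<bar> \<le> U \<longrightarrow> \<bar>A x + 2 * s * B x\<bar> \<le> c \<and> \<bar>2 * B x\<bar> \<le> c" for U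
    proof
      have Ub: "0 \<le> \<bar>U\<bar> * b" using b_nonneg by simp
      show "AE x in M. \<forall>s. \<bar>s\<bar> \<le> U \<longrightarrow>
          \<bar>A x + 2 * s * B x\<bar> \<le> a + 2 * \<bar>U\<bar> * b + 2 * b \<and> \<bar>2 * B x\<bar> \<le> a + 2 * \<bar>U\<bar> * b + 2 * b"
        using A_bounded B_bounded
      proof eventually_elim
        case (elim x)
        have "\<bar>A x + 2 * s * B x\<bar> \<le> a + 2 * \<bar>U\<bar> * b" if "\<bar>s\<bar> \<le> U" for s
          by (rule abs_tilt_le[OF elim]) (use that in linarith)
        then show ?case using elim a_nonneg b_nonneg Ub by fastforce
      qed
    qed
  qed simp_all
  also have "(\<integral>x. (2 * B x + (A x + 2 * t * B x) * (A x + 2 * t * B x)) * w t x \<partial>M) = Z'' t"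
    unfolding Z''_def by (simp add: power2_eq_square algebra_simps)
  finally show ?thesis unfolding Z'_def[abs_def] .
qed

lemma partition'_div: "Z' u / Z u = L u"
proof -
  have "Z' u / Z u = avg u (\<lambda>x. A x + (2 * u) * B x)"
    unfolding Z'_def gibbs_avg_def by (simp add: mult.assoc)
  also have "\<dots> = L u"
    unfolding dlog_partition_def by (rule gibbs_avg_linear[OF A_measurable B_measurable A_bounded B_bounded])
  finally show ?thesis .
qed

lemma partition''_div: "Z'' u / Z u = V u + (L u)\<^sup>2 + 2 * avg u B"
proof -
  have bq: "AE x in M. \<bar>(A x + 2 * u * B x)\<^sup>2\<bar> \<le> (a + 2 * \<bar>u\<bar> * b)\<^sup>2"
    using AE_abs_tilt_le[of u] by eventually_elim (simp add: square_le_if_abs_le)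
  have "Z'' u / Z u = avg u (\<lambda>x. (A x + 2 * u * B x)\<^sup>2) + 2 * avg u B"
    unfolding Z''_def gibbs_avg_def[symmetric] by (rule gibbs_avg_linear[OF _ B_measurable bq B_bounded]) simp
  moreover have "avg u (\<lambda>x. A x + 2 * u * B x) = L u"
    using partition'_div unfolding Z'_def gibbs_avg_def by simp
  ultimately show ?thesis unfolding gibbs_var_def by simp
qed

lemma log_partition_has_derivative: "((\<lambda>u. ln (Z u)) has_real_derivative L u) (at u)"
  using DERIV_chain2[OF DERIV_ln[OF partition_pos] partition_has_derivative]
  unfolding partition'_div[symmetric] by (simp add: divide_inverse mult.commute)

lemma dlog_partition_has_derivative: "(L has_real_derivative V u + 2 * avg u B) (at u)"
proof -
  have "((\<lambda>u. Z' u / Z u) has_real_derivative (Z'' u * Z u - Z' u * Z' u) / (Z u * Z u)) (at u)"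
    by (rule DERIV_divide[OF partition'_has_derivative partition_has_derivative])
      (use partition_pos[of u] in simp)
  moreover have "(Z'' u * Z u - Z' u * Z' u) / (Z u * Z u) = Z'' u / Z u - (Z' u / Z u)\<^sup>2"
    using partition_pos[of u] by (simp add: field_simps power2_eq_square)
  ultimately show ?thesis unfolding partition'_div partition''_div by simp
qed

lemma abs_dlog_partition_le: "\<bar>L u\<bar> \<le> a + 2 * \<bar>u\<bar> * b"
proof -
  have "\<bar>avg u A\<bar> \<le> a" "\<bar>avg u B\<bar> \<le> b"
    by (rule abs_gibbs_avg_le[OF A_measurable A_bounded], rule abs_gibbs_avg_le[OF B_measurable B_bounded])
  then have "\<bar>2 * u * avg u B\<bar> \<le> 2 * \<bar>u\<bar> * b" "\<bar>avg u A\<bar> \<le> a"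
    by (simp_all add: abs_mult mult_left_mono)
  then show ?thesis unfolding dlog_partition_def by linarith
qed

lemma gibbs_avg_lipschitz:
  assumes "b = 0"
  shows "\<bar>avg s A - avg s' A\<bar> \<le> a\<^sup>2 * \<bar>s - s'\<bar>"
proof -
  have avg_B: "avg u B = 0" for u
    using abs_gibbs_avg_le[OF B_measurable B_bounded, of u] assms by simp
  have "norm (L s - L s') \<le> a\<^sup>2 * norm (s - s')"
  proof (rule field_differentiable_bound[where S=UNIV])
    show "(L has_real_derivative V u + 2 * avg u B) (at u within UNIV)" for u
      by (rule dlog_partition_has_derivative)
    show "norm (V u + 2 * avg u B) \<le> a\<^sup>2" for u
      using gibbs_var_bounds[of u] assms avg_B by simp
  qed auto
  then show ?thesis unfolding dlog_partition_def avg_B by simp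
qed

lemma log_partition_sqrt_has_derivative:
  assumes "0 < s"
  shows "((\<lambda>s. ln (Z (sqrt s))) has_real_derivative L (sqrt s) / (2 * sqrt s)) (at s)"
proof -
  have eq: "L (sqrt s) * (inverse (sqrt s) / 2) = L (sqrt s) / (2 * sqrt s)"
    by (simp add: inverse_eq_divide)
  show ?thesis
    unfolding eq[symmetric] by (rule DERIV_chain2[OF log_partition_has_derivative DERIV_real_sqrt[OF assms]])
qed

lemma abs_dlog_partition_sqrt_le:
  assumes "0 < s"
  shows "\<bar>L (sqrt s) / (2 * sqrt s)\<bar> \<le> a / (2 * sqrt s) + b"
proof -
  have "\<bar>L (sqrt s) / (2 * sqrt s)\<bar> = \<bar>L (sqrt s)\<bar> / (2 * sqrt s)"
    using assms by (simp add: abs_divide)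
  also have "\<dots> \<le> (a + 2 * sqrt s * b) / (2 * sqrt s)"
    using abs_dlog_partition_le[of "sqrt s"] assms by (intro divide_right_mono) simp_all
  also have "\<dots> = a / (2 * sqrt s) + b" using assms by (simp add: field_simps)
  finally show ?thesis .
qed

lemma dlog_partition_sqrt_has_derivative:
  assumes "0 < s"
  obtains D where "((\<lambda>s. L (sqrt s) / (2 * sqrt s)) has_real_derivative D) (at s)"
    and "- a / (4 * s powr (3/2)) \<le> D"
proof -
  define v where "v = sqrt s"
  have v: "0 < v" "s = v\<^sup>2" using assms by (auto simp: v_def)
  have D: "((\<lambda>s. L (sqrt s) / (2 * sqrt s)) has_real_derivative
      ((V v + 2 * avg v B) * (inverse v / 2) * (2 * v) - L v * (2 * (inverse v / 2))) / ((2 * v) * (2 * v)))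
      (at s)"
    unfolding v_def
    by (rule DERIV_divide[OF DERIV_chain2[OF dlog_partition_has_derivative DERIV_real_sqrt[OF assms]]
          DERIV_cmult[OF DERIV_real_sqrt[OF assms]]]) (use assms in simp)
  have eq: "((V v + 2 * avg v B) * (inverse v / 2) * (2 * v) - L v * (2 * (inverse v / 2))) / ((2 * v) * (2 * v))
      = (V v - avg v A / v) / (4 * v\<^sup>2)"
    using v(1) unfolding dlog_partition_def by (simp add: field_simps power2_eq_square)
  have "- a / (4 * s powr (3/2)) \<le> (V v - avg v A / v) / (4 * v\<^sup>2)"
  proof -
    have "avg v A \<le> a" using abs_gibbs_avg_le[OF A_measurable A_bounded, of v] by simp
    then have "avg v A / v \<le> a / v" using v(1) by (simp add: divide_right_mono)
    then have "- a / v \<le> V v - avg v A / v"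
      unfolding minus_divide_left[symmetric] using gibbs_var_bounds(1)[of v] by linarith
    then have "(- a / v) / (4 * v\<^sup>2) \<le> (V v - avg v A / v) / (4 * v\<^sup>2)"
      by (rule divide_right_mono) simp
    moreover have "4 * s powr (3/2) = v * (4 * v\<^sup>2)"
      unfolding powr_three_halves[OF assms] v_def using assms by (simp add: mult_ac)
    ultimately show ?thesis by (metis divide_divide_eq_left)
  qed
  then show ?thesis by (rule that[OF D[unfolded eq]])
qed

lemma scaled_log_partition_sqrt_derivatives:
  fixes f :: "real \<Rightarrow> real"
  assumes f: "\<And>s. 0 \<le> s \<Longrightarrow> f s = ln (Z (sqrt s)) / n" and n: "0 < n" and s: "0 < s"
  shows "(f has_real_derivative L (sqrt s) / (2 * sqrt s) / n) (at s)"
    and "\<bar>L (sqrt s) / (2 * sqrt s) / n\<bar> \<le> (a / (2 * sqrt s) + b) / n"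
    and "\<exists>D. (deriv f has_real_derivative D) (at s) \<and> - a / (4 * s powr (3/2)) / n \<le> D"
proof -
  have df: "(f has_real_derivative L (sqrt s') / (2 * sqrt s') / n) (at s')" if "0 < s'" for s'
    by (rule has_field_derivative_transform_within_open[OF
          DERIV_cdivide[OF log_partition_sqrt_has_derivative[OF that]], of "{0<..}"])
      (use that f in auto)
  show "(f has_real_derivative L (sqrt s) / (2 * sqrt s) / n) (at s)" by (rule df[OF s])
  show "\<bar>L (sqrt s) / (2 * sqrt s) / n\<bar> \<le> (a / (2 * sqrt s) + b) / n"
    unfolding abs_divide[of "L (sqrt s) / (2 * sqrt s)" n] abs_of_pos[OF n]
    by (rule divide_right_mono[OF abs_dlog_partition_sqrt_le[OF s]]) (use n in simp)
  obtain D where D: "((\<lambda>s. L (sqrt s) / (2 * sqrt s)) has_real_derivative D) (at s)"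
    and D_ge: "- a / (4 * s powr (3/2)) \<le> D"
    using dlog_partition_sqrt_has_derivative[OF s] by blast
  have "(deriv f has_real_derivative D / n) (at s)"
  proof (rule has_field_derivative_transform_within_open[OF DERIV_cdivide[OF D], of "{0<..}"])
    show "L (sqrt s') / (2 * sqrt s') / n = deriv f s'" if "s' \<in> {0<..}" for s'
      using DERIV_imp_deriv[OF df, of s'] that by simp
  qed (use s in auto)
  moreover have "- a / (4 * s powr (3/2)) / n \<le> D / n"
    by (rule divide_right_mono[OF D_ge]) (use n in simp)
  ultimately show "\<exists>D. (deriv f has_real_derivative D) (at s) \<and> - a / (4 * s powr (3/2)) / n \<le> D"
    by blast
qed

end

section \<open>Resampling one coordinate and Gaussian integration by parts\<close>

text \<open>\<open>u x w\<close> is \<open>x\<close> with one coordinate replaced by \<open>w\<close>; the condition says that redrawing that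
  coordinate from \<open>G\<close> leaves \<open>M\<close> invariant, i.e. the coordinate has law \<open>G\<close> and is independent
  of the others.\<close>

definition resampling :: "'a measure \<Rightarrow> 'b measure \<Rightarrow> ('a \<Rightarrow> 'b \<Rightarrow> 'a) \<Rightarrow> bool" where
  "resampling M G u \<longleftrightarrow> (\<lambda>p. u (fst p) (snd p)) \<in> measurable (M \<Otimes>\<^sub>M G) M \<and>
     (\<forall>f \<in> borel_measurable M. (\<integral>\<^sup>+x. f x \<partial>M) = (\<integral>\<^sup>+x. \<integral>\<^sup>+w. f (u x w) \<partial>G \<partial>M))"

lemma resampling_PiM_component:
  assumes Q: "prob_space Q" and I: "finite I" "k \<in> I"
  shows "resampling (PiM I (\<lambda>_. Q)) Q (\<lambda>x w. x(k := w))"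
proof -
  interpret product_prob_space "\<lambda>_. Q" I
    by (rule product_prob_spaceI) (rule Q)
  interpret Qp: prob_space Q by (rule Q)
  define I' where "I' = I - {k}"
  have II: "I = insert k I'" "k \<notin> I'" "finite I'" using I by (auto simp: I'_def)
  have mupd[measurable]: "(\<lambda>p. (fst p) (k := snd p)) \<in> measurable (PiM I (\<lambda>_. Q) \<Otimes>\<^sub>M Q) (PiM I (\<lambda>_. Q))"
    by (rule measurable_fun_upd[where J=I]) (use I in auto)
  show ?thesis unfolding resampling_def
  proof (intro conjI ballI)
    show "(\<lambda>p. (fst p) (k := snd p)) \<in> measurable (PiM I (\<lambda>_. Q) \<Otimes>\<^sub>M Q) (PiM I (\<lambda>_. Q))" by (rule mupd)
    fix f :: "_ \<Rightarrow> ennreal" assume f[measurable]: "f \<in> borel_measurable (PiM I (\<lambda>_. Q))"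
    define \<phi> where "\<phi> x = (\<integral>\<^sup>+w. f (x(k := w)) \<partial>Q)" for x
    have m2: "(\<lambda>p. f ((fst p) (k := snd p))) \<in> borel_measurable (PiM I (\<lambda>_. Q) \<Otimes>\<^sub>M Q)"
      using measurable_comp[OF mupd f] by (simp add: comp_def)
    have m\<phi>[measurable]: "\<phi> \<in> borel_measurable (PiM I (\<lambda>_. Q))"
      unfolding \<phi>_def using sigma_finite_measure.borel_measurable_nn_integral_fst[OF prob_space_imp_sigma_finite[OF Q] m2] by simp
    have "(\<integral>\<^sup>+x. \<phi> x \<partial>PiM I (\<lambda>_. Q)) = (\<integral>\<^sup>+x. \<integral>\<^sup>+y. \<phi> (x(k := y)) \<partial>Q \<partial>PiM I' (\<lambda>_. Q))"
      using product_nn_integral_insert[OF II(3,2), of \<phi>] m\<phi> unfolding II(1)[symmetric] by simp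
    also have "\<dots> = (\<integral>\<^sup>+x. \<phi> x \<partial>PiM I' (\<lambda>_. Q))"
      unfolding \<phi>_def by (simp add: prob_space.emeasure_space_1[OF Q])
    also have "\<dots> = (\<integral>\<^sup>+x. f x \<partial>PiM I (\<lambda>_. Q))"
      unfolding \<phi>_def using product_nn_integral_insert[OF II(3,2), of f] f unfolding II(1)[symmetric] by simp
    finally show "(\<integral>\<^sup>+x. f x \<partial>PiM I (\<lambda>_. Q)) = (\<integral>\<^sup>+x. \<integral>\<^sup>+w. f (x(k := w)) \<partial>Q \<partial>PiM I (\<lambda>_. Q))"
      unfolding \<phi>_def by simp
  qed
qed

lemma resampling_PiM_nested:
  assumes Q: "prob_space Q" and G: "sigma_finite_measure G" and I: "finite I" "k \<in> I"
    and v: "resampling Q G v"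
  shows "resampling (PiM I (\<lambda>_. Q)) G (\<lambda>x w. x(k := v (x k) w))"
proof -
  let ?P = "PiM I (\<lambda>_. Q)"
  have rP: "resampling ?P Q (\<lambda>x w. x(k := w))" by (rule resampling_PiM_component[OF Q I])
  have mv[measurable]: "(\<lambda>p. v (fst p) (snd p)) \<in> measurable (Q \<Otimes>\<^sub>M G) Q"
    using v unfolding resampling_def by blast
  have mh: "(\<lambda>p. v (fst p k) (snd p)) \<in> measurable (?P \<Otimes>\<^sub>M G) Q"
  proof -
    have "(\<lambda>p. (fst p k, snd p)) \<in> measurable (?P \<Otimes>\<^sub>M G) (Q \<Otimes>\<^sub>M G)"
      using I by measurable
    from measurable_comp[OF this mv] show ?thesis by (simp add: comp_def)
  qed
  have mupd[measurable]: "(\<lambda>p. (fst p) (k := v (fst p k) (snd p))) \<in> measurable (?P \<Otimes>\<^sub>M G) ?P"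
    by (rule measurable_fun_upd[where J=I]) (use I mh in auto)
  show ?thesis unfolding resampling_def
  proof (intro conjI ballI)
    show "(\<lambda>p. (fst p) (k := v (fst p k) (snd p))) \<in> measurable (?P \<Otimes>\<^sub>M G) ?P" by (rule mupd)
    fix f :: "_ \<Rightarrow> ennreal" assume f[measurable]: "f \<in> borel_measurable ?P"
    define \<phi> where "\<phi> x = (\<integral>\<^sup>+w. f (x(k := v (x k) w)) \<partial>G)" for x
    have m2: "(\<lambda>p. f ((fst p) (k := v (fst p k) (snd p)))) \<in> borel_measurable (?P \<Otimes>\<^sub>M G)"
      using measurable_comp[OF mupd f] by (simp add: comp_def)
    have m\<phi>: "\<phi> \<in> borel_measurable ?P"
      unfolding \<phi>_def using sigma_finite_measure.borel_measurable_nn_integral_fst[OF G m2] by simp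
    have "(\<integral>\<^sup>+x. \<phi> x \<partial>?P) = (\<integral>\<^sup>+x. \<integral>\<^sup>+y. \<phi> (x(k := y)) \<partial>Q \<partial>?P)"
      using rP m\<phi> unfolding resampling_def by blast
    also have "\<dots> = (\<integral>\<^sup>+x. \<integral>\<^sup>+y. f (x(k := y)) \<partial>Q \<partial>?P)"
    proof (rule nn_integral_cong)
      fix x assume x: "x \<in> space ?P"
      have mfx: "(\<lambda>y. f (x(k := y))) \<in> borel_measurable Q"
      proof -
        have "(\<lambda>y. x(k := y)) \<in> measurable Q ?P"
          by (rule measurable_fun_upd[where J=I]) (use I x in auto)
        from measurable_comp[OF this f] show ?thesis by (simp add: comp_def)
      qed
      have "(\<integral>\<^sup>+y. \<phi> (x(k := y)) \<partial>Q) = (\<integral>\<^sup>+y. \<integral>\<^sup>+w. f (x(k := v y w)) \<partial>G \<partial>Q)"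
        unfolding \<phi>_def by simp
      also have "\<dots> = (\<integral>\<^sup>+y. f (x(k := y)) \<partial>Q)"
        using v mfx unfolding resampling_def by auto
      finally show "(\<integral>\<^sup>+y. \<phi> (x(k := y)) \<partial>Q) = (\<integral>\<^sup>+y. f (x(k := y)) \<partial>Q)" .
    qed
    also have "\<dots> = (\<integral>\<^sup>+x. f x \<partial>?P)"
      using rP f unfolding resampling_def by auto
    finally show "(\<integral>\<^sup>+x. f x \<partial>?P) = (\<integral>\<^sup>+x. \<integral>\<^sup>+w. f (x(k := v (x k) w)) \<partial>G \<partial>?P)"
      unfolding \<phi>_def by simp
  qed
qed

lemma resampling_pair_snd:
  assumes M2: "sigma_finite_measure M2" and G: "sigma_finite_measure G" and u: "resampling M2 G u"
  shows "resampling (M1 \<Otimes>\<^sub>M M2) G (\<lambda>p w. (fst p, u (snd p) w))"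
proof -
  have mu[measurable]: "(\<lambda>p. u (fst p) (snd p)) \<in> measurable (M2 \<Otimes>\<^sub>M G) M2"
    using u unfolding resampling_def by blast
  have mupd[measurable]: "(\<lambda>q. (fst (fst q), u (snd (fst q)) (snd q))) \<in> measurable ((M1 \<Otimes>\<^sub>M M2) \<Otimes>\<^sub>M G) (M1 \<Otimes>\<^sub>M M2)"
  proof -
    have "(\<lambda>q. (snd (fst q), snd q)) \<in> measurable ((M1 \<Otimes>\<^sub>M M2) \<Otimes>\<^sub>M G) (M2 \<Otimes>\<^sub>M G)" by measurable
    from measurable_comp[OF this mu] have "(\<lambda>q. u (snd (fst q)) (snd q)) \<in> measurable ((M1 \<Otimes>\<^sub>M M2) \<Otimes>\<^sub>M G) M2"
      by (simp add: comp_def)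
    then show ?thesis by measurable
  qed
  show ?thesis unfolding resampling_def
  proof (intro conjI ballI)
    show "(\<lambda>q. (fst (fst q), u (snd (fst q)) (snd q))) \<in> measurable ((M1 \<Otimes>\<^sub>M M2) \<Otimes>\<^sub>M G) (M1 \<Otimes>\<^sub>M M2)"
      by (rule mupd)
    fix f :: "_ \<Rightarrow> ennreal" assume f[measurable]: "f \<in> borel_measurable (M1 \<Otimes>\<^sub>M M2)"
    have m2: "(\<lambda>q. f (fst (fst q), u (snd (fst q)) (snd q))) \<in> borel_measurable ((M1 \<Otimes>\<^sub>M M2) \<Otimes>\<^sub>M G)"
      using measurable_comp[OF mupd f] by (simp add: comp_def)
    have m\<phi>: "(\<lambda>p. \<integral>\<^sup>+w. f (fst p, u (snd p) w) \<partial>G) \<in> borel_measurable (M1 \<Otimes>\<^sub>M M2)"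
      using sigma_finite_measure.borel_measurable_nn_integral_fst[OF G m2] by simp
    have "(\<integral>\<^sup>+p. \<integral>\<^sup>+w. f (fst p, u (snd p) w) \<partial>G \<partial>(M1 \<Otimes>\<^sub>M M2)) =
        (\<integral>\<^sup>+x. \<integral>\<^sup>+y. \<integral>\<^sup>+w. f (x, u y w) \<partial>G \<partial>M2 \<partial>M1)"
      using sigma_finite_measure.nn_integral_fst[OF M2 m\<phi>] by simp
    also have "\<dots> = (\<integral>\<^sup>+x. \<integral>\<^sup>+y. f (x, y) \<partial>M2 \<partial>M1)"
    proof (rule nn_integral_cong)
      fix x assume x: "x \<in> space M1"
      have "(\<lambda>y. f (x, y)) \<in> borel_measurable M2" using x by measurable
      then show "(\<integral>\<^sup>+y. \<integral>\<^sup>+w. f (x, u y w) \<partial>G \<partial>M2) = (\<integral>\<^sup>+y. f (x, y) \<partial>M2)"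
        using u unfolding resampling_def by auto
    qed
    also have "\<dots> = (\<integral>\<^sup>+p. f p \<partial>(M1 \<Otimes>\<^sub>M M2))"
      using sigma_finite_measure.nn_integral_fst[OF M2 f] by simp
    finally show "(\<integral>\<^sup>+p. f p \<partial>(M1 \<Otimes>\<^sub>M M2)) = (\<integral>\<^sup>+p. \<integral>\<^sup>+w. f (fst p, u (snd p) w) \<partial>G \<partial>(M1 \<Otimes>\<^sub>M M2))"
      by simp
  qed
qed

lemma resampling_pair_fst:
  assumes M2: "sigma_finite_measure M2" and G: "sigma_finite_measure G" and u: "resampling M1 G u"
  shows "resampling (M1 \<Otimes>\<^sub>M M2) G (\<lambda>p w. (u (fst p) w, snd p))"
proof -
  have mu[measurable]: "(\<lambda>p. u (fst p) (snd p)) \<in> measurable (M1 \<Otimes>\<^sub>M G) M1"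
    using u unfolding resampling_def by blast
  have mupd[measurable]: "(\<lambda>q. (u (fst (fst q)) (snd q), snd (fst q))) \<in> measurable ((M1 \<Otimes>\<^sub>M M2) \<Otimes>\<^sub>M G) (M1 \<Otimes>\<^sub>M M2)"
  proof -
    have "(\<lambda>q. (fst (fst q), snd q)) \<in> measurable ((M1 \<Otimes>\<^sub>M M2) \<Otimes>\<^sub>M G) (M1 \<Otimes>\<^sub>M G)" by measurable
    from measurable_comp[OF this mu] have "(\<lambda>q. u (fst (fst q)) (snd q)) \<in> measurable ((M1 \<Otimes>\<^sub>M M2) \<Otimes>\<^sub>M G) M1"
      by (simp add: comp_def)
    then show ?thesis by measurable
  qed
  interpret pG: pair_sigma_finite M2 G using M2 G by (simp add: pair_sigma_finite_def)
  show ?thesis unfolding resampling_def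
  proof (intro conjI ballI)
    show "(\<lambda>q. (u (fst (fst q)) (snd q), snd (fst q))) \<in> measurable ((M1 \<Otimes>\<^sub>M M2) \<Otimes>\<^sub>M G) (M1 \<Otimes>\<^sub>M M2)"
      by (rule mupd)
    fix f :: "_ \<Rightarrow> ennreal" assume f[measurable]: "f \<in> borel_measurable (M1 \<Otimes>\<^sub>M M2)"
    have m2: "(\<lambda>q. f (u (fst (fst q)) (snd q), snd (fst q))) \<in> borel_measurable ((M1 \<Otimes>\<^sub>M M2) \<Otimes>\<^sub>M G)"
      using measurable_comp[OF mupd f] by (simp add: comp_def)
    have m\<phi>: "(\<lambda>p. \<integral>\<^sup>+w. f (u (fst p) w, snd p) \<partial>G) \<in> borel_measurable (M1 \<Otimes>\<^sub>M M2)"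
      using sigma_finite_measure.borel_measurable_nn_integral_fst[OF G m2] by simp
    define \<psi> where "\<psi> x = (\<integral>\<^sup>+y. f (x, y) \<partial>M2)" for x
    have m\<psi>: "\<psi> \<in> borel_measurable M1"
      unfolding \<psi>_def using sigma_finite_measure.borel_measurable_nn_integral_fst[OF M2 f] by simp
    have "(\<integral>\<^sup>+p. \<integral>\<^sup>+w. f (u (fst p) w, snd p) \<partial>G \<partial>(M1 \<Otimes>\<^sub>M M2)) =
        (\<integral>\<^sup>+x. \<integral>\<^sup>+y. \<integral>\<^sup>+w. f (u x w, y) \<partial>G \<partial>M2 \<partial>M1)"
      using sigma_finite_measure.nn_integral_fst[OF M2 m\<phi>] by simp
    also have "\<dots> = (\<integral>\<^sup>+x. \<integral>\<^sup>+w. \<psi> (u x w) \<partial>G \<partial>M1)"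
    proof (rule nn_integral_cong)
      fix x assume x: "x \<in> space M1"
      have "(\<lambda>w. (x, w)) \<in> measurable G (M1 \<Otimes>\<^sub>M G)" using x by measurable
      from measurable_comp[OF this mu] have mux: "(\<lambda>w. u x w) \<in> measurable G M1" by (simp add: comp_def)
      have "(\<lambda>q. f (u x (snd q), fst q)) \<in> borel_measurable (M2 \<Otimes>\<^sub>M G)"
        using mux by measurable
      then show "(\<integral>\<^sup>+y. \<integral>\<^sup>+w. f (u x w, y) \<partial>G \<partial>M2) = (\<integral>\<^sup>+w. \<psi> (u x w) \<partial>G)"
        unfolding \<psi>_def using pG.Fubini[of "\<lambda>q. f (u x (snd q), fst q)"] by simp
    qed
    also have "\<dots> = (\<integral>\<^sup>+x. \<psi> x \<partial>M1)"
      using u m\<psi> unfolding resampling_def by auto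
    also have "\<dots> = (\<integral>\<^sup>+p. f p \<partial>(M1 \<Otimes>\<^sub>M M2))"
      unfolding \<psi>_def using sigma_finite_measure.nn_integral_fst[OF M2 f] by simp
    finally show "(\<integral>\<^sup>+p. f p \<partial>(M1 \<Otimes>\<^sub>M M2)) = (\<integral>\<^sup>+p. \<integral>\<^sup>+w. f (u (fst p) w, snd p) \<partial>G \<partial>(M1 \<Otimes>\<^sub>M M2))"
      by simp
  qed
qed

lemma distr_resampling:
  assumes G: "sigma_finite_measure G" and u: "resampling M G u"
  shows "distr (M \<Otimes>\<^sub>M G) M (\<lambda>p. u (fst p) (snd p)) = M"
proof (rule measure_eqI)
  have mu[measurable]: "(\<lambda>p. u (fst p) (snd p)) \<in> measurable (M \<Otimes>\<^sub>M G) M"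
    using u unfolding resampling_def by blast
  show "sets (distr (M \<Otimes>\<^sub>M G) M (\<lambda>p. u (fst p) (snd p))) = sets M" by simp
  fix A assume A: "A \<in> sets (distr (M \<Otimes>\<^sub>M G) M (\<lambda>p. u (fst p) (snd p)))"
  then have A': "A \<in> sets M" by simp
  have "emeasure (distr (M \<Otimes>\<^sub>M G) M (\<lambda>p. u (fst p) (snd p))) A =
      (\<integral>\<^sup>+x. indicator A x \<partial>distr (M \<Otimes>\<^sub>M G) M (\<lambda>p. u (fst p) (snd p)))"
    using A by simp
  also have "\<dots> = (\<integral>\<^sup>+p. indicator A (u (fst p) (snd p)) \<partial>(M \<Otimes>\<^sub>M G))"
    using A' by (subst nn_integral_distr) auto
  also have "\<dots> = (\<integral>\<^sup>+x. \<integral>\<^sup>+w. indicator A (u x w) \<partial>G \<partial>M)"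
  proof -
    have "(\<lambda>p. indicator A (u (fst p) (snd p)) :: ennreal) \<in> borel_measurable (M \<Otimes>\<^sub>M G)"
      using A' by measurable
    from sigma_finite_measure.nn_integral_fst[OF G this] show ?thesis by simp
  qed
  also have "\<dots> = (\<integral>\<^sup>+x. indicator A x \<partial>M)"
  proof -
    have "(\<lambda>x. indicator A x :: ennreal) \<in> borel_measurable M" using A' by measurable
    moreover have "\<forall>f\<in>borel_measurable M. (\<integral>\<^sup>+x. f x \<partial>M) = (\<integral>\<^sup>+x. \<integral>\<^sup>+w. f (u x w) \<partial>G \<partial>M)"
      using u unfolding resampling_def by blast
    ultimately show ?thesis by (rule_tac sym, elim bspec)
  qed
  also have "\<dots> = emeasure M A" using A' by simp
  finally show "emeasure (distr (M \<Otimes>\<^sub>M G) M (\<lambda>p. u (fst p) (snd p))) A = emeasure M A" .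
qed

lemma integral_resampling:
  fixes f :: "'a \<Rightarrow> real"
  assumes M: "sigma_finite_measure M" and G: "sigma_finite_measure G" and u: "resampling M G u"
    and f: "integrable M f"
  shows "(\<integral>x. f x \<partial>M) = (\<integral>x. \<integral>w. f (u x w) \<partial>G \<partial>M)"
proof -
  have [measurable]: "(\<lambda>p. u (fst p) (snd p)) \<in> measurable (M \<Otimes>\<^sub>M G) M"
    using u unfolding resampling_def by blast
  have d: "distr (M \<Otimes>\<^sub>M G) M (\<lambda>p. u (fst p) (snd p)) = M" by (rule distr_resampling[OF G u])
  have [measurable]: "f \<in> borel_measurable M" using f by simp
  have "integrable (distr (M \<Otimes>\<^sub>M G) M (\<lambda>p. u (fst p) (snd p))) f" using f d by simp
  then have i: "integrable (M \<Otimes>\<^sub>M G) (\<lambda>p. f (u (fst p) (snd p)))"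
    by (rule integrable_distr_eq[THEN iffD1, rotated 2]) measurable
  interpret pair_sigma_finite M G using M G by (simp add: pair_sigma_finite_def)
  have "(\<integral>x. f x \<partial>M) = (\<integral>p. f (u (fst p) (snd p)) \<partial>(M \<Otimes>\<^sub>M G))"
    by (subst d[symmetric], rule integral_distr) measurable
  also have "\<dots> = (\<integral>x. \<integral>w. f (u x w) \<partial>G \<partial>M)"
    using integral_fst'[OF i] by simp
  finally show ?thesis .
qed

lemma prob_space_gauss: "prob_space gauss"
  unfolding gauss_def by (rule prob_space_normal_density) simp

lemma sigma_finite_gauss: "sigma_finite_measure gauss"
  using prob_space_gauss prob_space_imp_sigma_finite by blast

lemma sets_gauss[simp, measurable_cong]: "sets gauss = sets borel"
  unfolding gauss_def by simp

lemma gauss_first_moment: "integrable gauss (\<lambda>x. x)" "(\<integral>x. x \<partial>gauss) = 0"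
proof -
  show "integrable gauss (\<lambda>x. x)"
    using integrable_std_normal_distribution_moment[of 1] unfolding gauss_def by simp
  show "(\<integral>x. x \<partial>gauss) = 0"
    using integral_std_normal_distribution_moment_odd[of 1] unfolding gauss_def by simp
qed

lemma gauss_second_moment: "integrable gauss (\<lambda>x. x\<^sup>2)" "(\<integral>x. x\<^sup>2 \<partial>gauss) = 1"
proof -
  show "integrable gauss (\<lambda>x. x\<^sup>2)"
    using integrable_std_normal_distribution_moment[of 2] unfolding gauss_def by simp
  show "(\<integral>x. x\<^sup>2 \<partial>gauss) = 1"
    using std_normal_distribution_even_moments(1)[of 1] unfolding gauss_def by simp
qed

lemma abs_gauss_integral_times_le:
  fixes g :: "real \<Rightarrow> real"
  assumes [measurable]: "g \<in> borel_measurable borel"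
    and lip: "\<And>w. \<bar>g w - g 0\<bar> \<le> L * \<bar>w\<bar>"
  shows "\<bar>\<integral>w. w * g w \<partial>gauss\<bar> \<le> L"
proof -
  interpret prob_space gauss by (rule prob_space_gauss)
  have bound: "\<bar>w * (g w - g 0)\<bar> \<le> L * w\<^sup>2" for w
  proof -
    have "\<bar>w * (g w - g 0)\<bar> \<le> \<bar>w\<bar> * (L * \<bar>w\<bar>)" unfolding abs_mult by (rule mult_left_mono[OF lip]) simp
    also have "\<dots> = L * w\<^sup>2" by (simp add: power2_eq_square abs_mult_self)
    finally show ?thesis .
  qed
  have iL: "integrable gauss (\<lambda>w. L * w\<^sup>2)" using gauss_second_moment(1) by simp
  have i: "integrable gauss (\<lambda>w. w * (g w - g 0))"
  proof (rule Bochner_Integration.integrable_bound[OF iL])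
    show "AE w in gauss. norm (w * (g w - g 0)) \<le> norm (L * w\<^sup>2)"
      using bound by (intro AE_I2) (metis abs_ge_self order_trans real_norm_def)
  qed measurable
  have "(\<integral>w. w * g w \<partial>gauss) = (\<integral>w. w * (g w - g 0) + g 0 * w \<partial>gauss)"
    by (simp add: algebra_simps)
  also have "\<dots> = (\<integral>w. w * (g w - g 0) \<partial>gauss)"
    using i gauss_first_moment by simp
  finally have "\<bar>\<integral>w. w * g w \<partial>gauss\<bar> \<le> (\<integral>w. \<bar>w * (g w - g 0)\<bar> \<partial>gauss)"
    using integral_norm_bound[of gauss "\<lambda>w. w * (g w - g 0)"] by simp
  also have "\<dots> \<le> (\<integral>w. L * w\<^sup>2 \<partial>gauss)"
    by (rule integral_mono) (use i iL bound in auto)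
  also have "\<dots> = L" using gauss_second_moment(2) by simp
  finally show ?thesis .
qed

lemma integrable_resampled_coordinate:
  fixes g :: "'a \<Rightarrow> real"
  assumes M: "prob_space M" and u: "resampling M gauss u" and [measurable]: "g \<in> borel_measurable M"
    and g_u: "\<And>x w. g (u x w) = w"
  shows "integrable M (\<lambda>x. (g x)\<^sup>2)" "integrable M g"
proof -
  interpret prob_space M by (rule M)
  have "(\<integral>\<^sup>+x. ennreal ((g x)\<^sup>2) \<partial>M) = (\<integral>\<^sup>+x. \<integral>\<^sup>+w. ennreal ((g (u x w))\<^sup>2) \<partial>gauss \<partial>M)"
  proof -
    have "(\<lambda>x. ennreal ((g x)\<^sup>2)) \<in> borel_measurable M" by measurable
    then show ?thesis using u unfolding resampling_def by blast
  qed
  also have "\<dots> = (\<integral>\<^sup>+x. ennreal (\<integral>w. w\<^sup>2 \<partial>gauss) \<partial>M)"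
    unfolding g_u by (subst nn_integral_eq_integral[OF gauss_second_moment(1)]) simp_all
  also have "\<dots> = 1" by (simp add: gauss_second_moment(2) emeasure_space_1)
  finally show sq: "integrable M (\<lambda>x. (g x)\<^sup>2)"
    by (intro integrableI_bounded) simp_all
  show "integrable M g" by (rule square_integrable_imp_integrable[OF _ sq]) simp
qed

section \<open>Averaging over a Gaussian linear disorder\<close>

locale gaussian_disorder =
  fixes Om :: "'w measure" and mu :: "'x measure" and n :: real
    and J :: "'k set" and G :: "'k \<Rightarrow> 'w \<Rightarrow> real" and phi :: "'k \<Rightarrow> 'x \<Rightarrow> real"
    and B R :: "'w \<Rightarrow> 'x \<Rightarrow> real" and resample :: "'k \<Rightarrow> 'w \<Rightarrow> real \<Rightarrow> 'w"
    and c_phi c_B :: real and c_R :: "'w \<Rightarrow> real"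
  assumes prob_Om: "prob_space Om" and prob_mu: "prob_space mu"
    and n_pos: "0 < n" and finite_J: "finite J"
    and G_measurable[measurable]: "\<And>k. G k \<in> borel_measurable Om"
    and phi_measurable[measurable]: "\<And>k. phi k \<in> borel_measurable mu"
    and B_measurable[measurable]: "(\<lambda>p. B (fst p) (snd p)) \<in> borel_measurable (Om \<Otimes>\<^sub>M mu)"
    and R_measurable[measurable]: "(\<lambda>p. R (fst p) (snd p)) \<in> borel_measurable (Om \<Otimes>\<^sub>M mu)"
    and B_measurable': "\<And>\<omega>. B \<omega> \<in> borel_measurable mu"
    and R_measurable': "\<And>\<omega>. R \<omega> \<in> borel_measurable mu"
    and phi_bounded: "\<And>k. k \<in> J \<Longrightarrow> AE x in mu. \<bar>phi k x\<bar> \<le> c_phi"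
    and B_bounded: "\<And>\<omega>. \<exists>b. AE x in mu. \<bar>B \<omega> x\<bar> \<le> b"
    and R_bounded: "\<And>\<omega>. \<exists>r. AE x in mu. \<bar>R \<omega> x\<bar> \<le> r"
    and AE_B_bounded: "AE \<omega> in Om. AE x in mu. \<bar>B \<omega> x\<bar> \<le> c_B"
    and AE_R_bounded: "AE \<omega> in Om. AE x in mu. \<bar>R \<omega> x\<bar> \<le> c_R \<omega>"
    and integrable_c_R: "integrable Om c_R"
    and resampling_G: "\<And>k. k \<in> J \<Longrightarrow> resampling Om gauss (resample k)"
    and G_resample: "\<And>k w \<omega>. k \<in> J \<Longrightarrow> G k (resample k \<omega> w) = w"
    and G_resample_other: "\<And>k l w \<omega>. k \<in> J \<Longrightarrow> l \<in> J \<Longrightarrow> l \<noteq> k \<Longrightarrow> G l (resample k \<omega> w) = G l \<omega>"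
    and B_resample: "\<And>k w \<omega>. k \<in> J \<Longrightarrow> B (resample k \<omega> w) = B \<omega>"
    and R_resample: "\<And>k w \<omega>. k \<in> J \<Longrightarrow> R (resample k \<omega> w) = R \<omega>"
begin

interpretation Om: prob_space Om by (rule prob_Om)
interpretation mu: prob_space mu by (rule prob_mu)

definition "A \<omega> x = (\<Sum>k\<in>J. G k \<omega> * phi k x)"
definition "c_A \<omega> = (\<Sum>k\<in>J. \<bar>G k \<omega>\<bar>) * c_phi"

definition "psi \<omega> u = ln (partition_fn mu (A \<omega>) (B \<omega>) (R \<omega>) u) / n"
definition "psi' \<omega> u = dlog_partition mu (A \<omega>) (B \<omega>) (R \<omega>) u / n"
definition "psi'' \<omega> u =
  (gibbs_var mu (A \<omega>) (B \<omega>) (R \<omega>) u + 2 * gibbs_avg mu (A \<omega>) (B \<omega>) (R \<omega>) u (B \<omega>)) / n"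

definition "Phi u = (\<integral>\<omega>. psi \<omega> u \<partial>Om)"
definition "Phi' u = (\<integral>\<omega>. psi' \<omega> u \<partial>Om)"
definition "Phi'' u = (\<integral>\<omega>. psi'' \<omega> u \<partial>Om)"

lemma c_phi_nonneg: "J \<noteq> {} \<Longrightarrow> 0 \<le> c_phi"
  using phi_bounded mu.nonneg_if_AE_abs_le by blast

lemma A_measurable: "A \<omega> \<in> borel_measurable mu"
  unfolding A_def by measurable

lemma A_measurable_pair[measurable]: "(\<lambda>p. A (fst p) (snd p)) \<in> borel_measurable (Om \<Otimes>\<^sub>M mu)"
  unfolding A_def by measurable

lemma abs_sum_G_phi_le:
  assumes "\<forall>k\<in>J. \<bar>phi k x\<bar> \<le> c_phi" "J' \<subseteq> J"
  shows "\<bar>\<Sum>k\<in>J'. G k \<omega> * phi k x\<bar> \<le> c_A \<omega>"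
proof -
  have "\<bar>\<Sum>k\<in>J'. G k \<omega> * phi k x\<bar> \<le> (\<Sum>k\<in>J'. \<bar>G k \<omega> * phi k x\<bar>)"
    by (rule sum_abs)
  also have "\<dots> \<le> (\<Sum>k\<in>J'. \<bar>G k \<omega>\<bar> * c_phi)"
  proof (rule sum_mono)
    fix k assume "k \<in> J'"
    then have "\<bar>phi k x\<bar> \<le> c_phi" using assms by auto
    then show "\<bar>G k \<omega> * phi k x\<bar> \<le> \<bar>G k \<omega>\<bar> * c_phi" by (simp add: abs_mult mult_left_mono)
  qed
  also have "\<dots> \<le> (\<Sum>k\<in>J. \<bar>G k \<omega>\<bar> * c_phi)"
  proof (cases "J = {}")
    case False
    then show ?thesis
      using c_phi_nonneg finite_J assms(2) by (intro sum_mono2) auto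
  qed (use assms(2) in simp)
  finally show ?thesis unfolding c_A_def by (simp add: sum_distrib_right)
qed

lemma AE_abs_A_le: "AE x in mu. \<bar>A \<omega> x\<bar> \<le> c_A \<omega>"
proof -
  have "AE x in mu. \<forall>k\<in>J. \<bar>phi k x\<bar> \<le> c_phi"
    using finite_J phi_bounded by (simp add: eventually_ball_finite)
  then show ?thesis
    unfolding A_def by eventually_elim (rule abs_sum_G_phi_le, auto)
qed

lemma gibbs_family_at: "\<exists>b r. gibbs_family mu (A \<omega>) (B \<omega>) (R \<omega>) (c_A \<omega>) b r"
  using B_bounded[of \<omega>] R_bounded[of \<omega>] prob_mu A_measurable B_measurable' R_measurable' AE_abs_A_le
  unfolding gibbs_family_def gibbs_family_axioms_def by blast

lemma AE_gibbs_family: "AE \<omega> in Om. gibbs_family mu (A \<omega>) (B \<omega>) (R \<omega>) (c_A \<omega>) c_B (c_R \<omega>)"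
  using AE_B_bounded AE_R_bounded
  by eventually_elim
    (use prob_mu A_measurable B_measurable' R_measurable' AE_abs_A_le in
      \<open>auto simp: gibbs_family_def gibbs_family_axioms_def\<close>)

lemma psi_has_derivative: "((\<lambda>u. psi \<omega> u) has_real_derivative psi' \<omega> u) (at u)"
proof -
  obtain b r where "gibbs_family mu (A \<omega>) (B \<omega>) (R \<omega>) (c_A \<omega>) b r"
    using gibbs_family_at by blast
  then interpret gibbs_family mu "A \<omega>" "B \<omega>" "R \<omega>" "c_A \<omega>" b r .
  show ?thesis unfolding psi_def[abs_def] psi'_def by (rule DERIV_cdivide[OF log_partition_has_derivative])
qed

lemma psi'_has_derivative: "((\<lambda>u. psi' \<omega> u) has_real_derivative psi'' \<omega> u) (at u)"
proof -
  obtain b r where "gibbs_family mu (A \<omega>) (B \<omega>) (R \<omega>) (c_A \<omega>) b r"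
    using gibbs_family_at by blast
  then interpret gibbs_family mu "A \<omega>" "B \<omega>" "R \<omega>" "c_A \<omega>" b r .
  show ?thesis unfolding psi'_def[abs_def] psi''_def by (rule DERIV_cdivide[OF dlog_partition_has_derivative])
qed

lemma AE_abs_psi_le: "AE \<omega> in Om. \<bar>psi \<omega> u\<bar> \<le> (\<bar>u\<bar> * c_A \<omega> + u\<^sup>2 * c_B + c_R \<omega>) / n"
  using AE_gibbs_family
proof eventually_elim
  case (elim \<omega>)
  interpret gibbs_family mu "A \<omega>" "B \<omega>" "R \<omega>" "c_A \<omega>" c_B "c_R \<omega>" by (rule elim)
  show ?case
    unfolding psi_def using abs_log_partition_le[of u] n_pos by (simp add: abs_divide divide_right_mono)
qed

lemma AE_abs_psi'_le: "AE \<omega> in Om. \<forall>s. \<bar>s\<bar> \<le> U \<longrightarrow> \<bar>psi' \<omega> s\<bar> \<le> (c_A \<omega> + 2 * U * c_B) / n"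
  using AE_gibbs_family
proof eventually_elim
  case (elim \<omega>)
  interpret gibbs_family mu "A \<omega>" "B \<omega>" "R \<omega>" "c_A \<omega>" c_B "c_R \<omega>" by (rule elim)
  show ?case
  proof (intro allI impI)
    fix s assume "\<bar>s\<bar> \<le> U"
    then have "\<bar>L s\<bar> \<le> c_A \<omega> + 2 * U * c_B"
      using abs_dlog_partition_le[of s] mult_right_mono[OF \<open>\<bar>s\<bar> \<le> U\<close> b_nonneg] by linarith
    then show "\<bar>psi' \<omega> s\<bar> \<le> (c_A \<omega> + 2 * U * c_B) / n"
      unfolding psi'_def using n_pos by (simp add: abs_divide divide_right_mono)
  qed
qed

lemma AE_abs_psi''_le:
  "AE \<omega> in Om. \<forall>s. \<bar>s\<bar> \<le> U \<longrightarrow> \<bar>psi'' \<omega> s\<bar> \<le> ((c_A \<omega> + 2 * U * c_B)\<^sup>2 + 2 * c_B) / n"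
  using AE_gibbs_family
proof eventually_elim
  case (elim \<omega>)
  interpret gibbs_family mu "A \<omega>" "B \<omega>" "R \<omega>" "c_A \<omega>" c_B "c_R \<omega>" by (rule elim)
  show ?case
  proof (intro allI impI)
    fix s assume "\<bar>s\<bar> \<le> U"
    then have "(c_A \<omega> + 2 * \<bar>s\<bar> * c_B)\<^sup>2 \<le> (c_A \<omega> + 2 * U * c_B)\<^sup>2"
      using a_nonneg b_nonneg by (intro power_mono) (auto intro: mult_right_mono)
    then have "\<bar>V s + 2 * avg s (B \<omega>)\<bar> \<le> (c_A \<omega> + 2 * U * c_B)\<^sup>2 + 2 * c_B"
      using gibbs_var_bounds[of s] abs_gibbs_avg_le[OF B_measurable B_bounded, of s] by (simp add: abs_le_iff)
    then show "\<bar>psi'' \<omega> s\<bar> \<le> ((c_A \<omega> + 2 * U * c_B)\<^sup>2 + 2 * c_B) / n"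
      unfolding psi''_def using n_pos by (simp add: abs_divide divide_right_mono)
  qed
qed

lemma measurable_integral_snd:
  fixes f :: "'w \<Rightarrow> 'x \<Rightarrow> real"
  assumes "(\<lambda>p. f (fst p) (snd p)) \<in> borel_measurable (Om \<Otimes>\<^sub>M mu)"
  shows "(\<lambda>\<omega>. \<integral>x. f \<omega> x \<partial>mu) \<in> borel_measurable Om"
proof -
  have "(\<lambda>(\<omega>, x). f \<omega> x) \<in> borel_measurable (Om \<Otimes>\<^sub>M mu)"
    using assms by (simp add: case_prod_beta')
  then show ?thesis by (rule mu.borel_measurable_lebesgue_integral)
qed

lemma measurable_gibbs_avg:
  assumes "(\<lambda>p. f (fst p) (snd p)) \<in> borel_measurable (Om \<Otimes>\<^sub>M mu)"
  shows "(\<lambda>\<omega>. gibbs_avg mu (A \<omega>) (B \<omega>) (R \<omega>) u (f \<omega>)) \<in> borel_measurable Om"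
proof -
  have [measurable]: "(\<lambda>p. gibbs_weight (A (fst p)) (B (fst p)) (R (fst p)) u (snd p)) \<in> borel_measurable (Om \<Otimes>\<^sub>M mu)"
    unfolding gibbs_weight_def by measurable
  note [measurable] = assms
    measurable_integral_snd[of "\<lambda>\<omega> x. f \<omega> x * gibbs_weight (A \<omega>) (B \<omega>) (R \<omega>) u x"]
    measurable_integral_snd[of "\<lambda>\<omega> x. gibbs_weight (A \<omega>) (B \<omega>) (R \<omega>) u x"]
  show ?thesis unfolding gibbs_avg_def partition_fn_def by measurable
qed

lemma psi_measurable[measurable]: "(\<lambda>\<omega>. psi \<omega> u) \<in> borel_measurable Om"
proof -
  have "(\<lambda>p. gibbs_weight (A (fst p)) (B (fst p)) (R (fst p)) u (snd p)) \<in> borel_measurable (Om \<Otimes>\<^sub>M mu)"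
    unfolding gibbs_weight_def by measurable
  note [measurable] = measurable_integral_snd[OF this]
  show ?thesis unfolding psi_def partition_fn_def by measurable
qed

lemma psi'_measurable[measurable]: "(\<lambda>\<omega>. psi' \<omega> u) \<in> borel_measurable Om"
proof -
  note [measurable] = measurable_gibbs_avg[OF A_measurable_pair] measurable_gibbs_avg[OF B_measurable]
  show ?thesis unfolding psi'_def dlog_partition_def by measurable
qed

lemma psi''_measurable[measurable]: "(\<lambda>\<omega>. psi'' \<omega> u) \<in> borel_measurable Om"
proof -
  note [measurable] = measurable_gibbs_avg[OF B_measurable]
    measurable_gibbs_avg[of "\<lambda>\<omega> x. A \<omega> x + 2 * u * B \<omega> x"]
    measurable_gibbs_avg[of "\<lambda>\<omega> x. (A \<omega> x + 2 * u * B \<omega> x)\<^sup>2"]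
  show ?thesis unfolding psi''_def gibbs_var_def by measurable
qed

lemma integrable_G_square: "k \<in> J \<Longrightarrow> integrable Om (\<lambda>\<omega>. (G k \<omega>)\<^sup>2)"
  and integrable_G: "k \<in> J \<Longrightarrow> integrable Om (G k)"
  using integrable_resampled_coordinate[OF prob_Om resampling_G G_measurable G_resample] by blast+

lemma c_A_measurable[measurable]: "c_A \<in> borel_measurable Om"
  unfolding c_A_def by measurable

lemma integrable_c_A: "integrable Om c_A"
  unfolding c_A_def using integrable_G by (auto intro!: Bochner_Integration.integrable_sum)

lemma integrable_c_A_square: "integrable Om (\<lambda>\<omega>. (c_A \<omega>)\<^sup>2)"
proof (rule Bochner_Integration.integrable_bound)
  show "integrable Om (\<lambda>\<omega>. c_phi\<^sup>2 * (real (card J) * (\<Sum>k\<in>J. (G k \<omega>)\<^sup>2)))"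
    using integrable_G_square by (auto intro!: Bochner_Integration.integrable_sum)
  show "AE \<omega> in Om. norm ((c_A \<omega>)\<^sup>2) \<le> norm (c_phi\<^sup>2 * (real (card J) * (\<Sum>k\<in>J. (G k \<omega>)\<^sup>2)))"
  proof (rule AE_I2)
    fix \<omega>
    have "(c_A \<omega>)\<^sup>2 = c_phi\<^sup>2 * (\<Sum>k\<in>J. \<bar>G k \<omega>\<bar> * 1)\<^sup>2"
      unfolding c_A_def by (simp add: power_mult_distrib)
    also have "\<dots> \<le> c_phi\<^sup>2 * ((\<Sum>k\<in>J. (G k \<omega>)\<^sup>2) * real (card J))"
      using Cauchy_Schwarz_ineq_sum[of "\<lambda>k. \<bar>G k \<omega>\<bar>" "\<lambda>_. 1" J] by (intro mult_left_mono) simp_all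
    finally show "norm ((c_A \<omega>)\<^sup>2) \<le> norm (c_phi\<^sup>2 * (real (card J) * (\<Sum>k\<in>J. (G k \<omega>)\<^sup>2)))"
      by (simp add: mult.commute sum_nonneg)
  qed
qed simp

lemma integrable_psi: "integrable Om (\<lambda>\<omega>. psi \<omega> u)"
proof (rule Bochner_Integration.integrable_bound)
  show "integrable Om (\<lambda>\<omega>. (\<bar>u\<bar> * c_A \<omega> + u\<^sup>2 * c_B + c_R \<omega>) / n)"
    using integrable_c_A integrable_c_R by simp
  show "AE \<omega> in Om. norm (psi \<omega> u) \<le> norm ((\<bar>u\<bar> * c_A \<omega> + u\<^sup>2 * c_B + c_R \<omega>) / n)"
    using AE_abs_psi_le[of u] by eventually_elim (metis abs_ge_self order.trans real_norm_def)
qed simp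

lemma integrable_psi': "integrable Om (\<lambda>\<omega>. psi' \<omega> u)"
proof (rule Bochner_Integration.integrable_bound)
  show "integrable Om (\<lambda>\<omega>. (c_A \<omega> + 2 * \<bar>u\<bar> * c_B) / n)"
    using integrable_c_A by simp
  show "AE \<omega> in Om. norm (psi' \<omega> u) \<le> norm ((c_A \<omega> + 2 * \<bar>u\<bar> * c_B) / n)"
    using AE_abs_psi'_le[of "\<bar>u\<bar>"] by eventually_elim (metis abs_ge_self order.trans order.refl real_norm_def)
qed simp

lemma Phi_has_derivative: "(Phi has_real_derivative Phi' t) (at t)"
  unfolding Phi_def[abs_def] Phi'_def
proof (rule has_real_derivative_integral[where e=1 and g="\<lambda>\<omega>. (c_A \<omega> + 2 * (\<bar>t\<bar> + 1) * c_B) / n"])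
  show "AE \<omega> in Om. \<forall>s\<in>ball t 1. \<bar>psi' \<omega> s\<bar> \<le> (c_A \<omega> + 2 * (\<bar>t\<bar> + 1) * c_B) / n"
    using AE_abs_psi'_le[of "\<bar>t\<bar> + 1"] by eventually_elim (auto simp: dist_real_def)
qed (use integrable_psi integrable_c_A psi_has_derivative in auto)

lemma Phi'_has_derivative: "(Phi' has_real_derivative Phi'' t) (at t)"
  unfolding Phi'_def[abs_def] Phi''_def
proof (rule has_real_derivative_integral[where e=1 and g="\<lambda>\<omega>. ((c_A \<omega> + 2 * (\<bar>t\<bar> + 1) * c_B)\<^sup>2 + 2 * c_B) / n"])
  show "integrable Om (\<lambda>\<omega>. ((c_A \<omega> + 2 * (\<bar>t\<bar> + 1) * c_B)\<^sup>2 + 2 * c_B) / n)"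
    using integrable_c_A integrable_c_A_square by (simp add: power2_sum)
  show "AE \<omega> in Om. \<forall>s\<in>ball t 1. \<bar>psi'' \<omega> s\<bar> \<le> ((c_A \<omega> + 2 * (\<bar>t\<bar> + 1) * c_B)\<^sup>2 + 2 * c_B) / n"
    using AE_abs_psi''_le[of "\<bar>t\<bar> + 1"] by eventually_elim (auto simp: dist_real_def)
qed (use integrable_psi' psi'_has_derivative in auto)

definition "avg_phi k \<omega> u = gibbs_avg mu (A \<omega>) (B \<omega>) (R \<omega>) u (phi k)"
definition "avg_B \<omega> u = gibbs_avg mu (A \<omega>) (B \<omega>) (R \<omega>) u (B \<omega>)"

abbreviation "c_Phi \<equiv> (real (card J) * c_phi\<^sup>2 + 2 * c_B) / n"

lemma avg_phi_measurable[measurable]: "(\<lambda>\<omega>. avg_phi k \<omega> u) \<in> borel_measurable Om"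
  unfolding avg_phi_def by (rule measurable_gibbs_avg) measurable

lemma avg_B_measurable[measurable]: "(\<lambda>\<omega>. avg_B \<omega> u) \<in> borel_measurable Om"
  unfolding avg_B_def by (rule measurable_gibbs_avg[OF B_measurable])

lemma abs_avg_phi_le: "k \<in> J \<Longrightarrow> \<bar>avg_phi k \<omega> u\<bar> \<le> c_phi"
  using gibbs_family_at[of \<omega>] gibbs_family.abs_gibbs_avg_le[OF _ phi_measurable phi_bounded]
  unfolding avg_phi_def by blast

lemma AE_abs_avg_B_le: "AE \<omega> in Om. \<bar>avg_B \<omega> u\<bar> \<le> c_B"
  using AE_gibbs_family
proof eventually_elim
  case (elim \<omega>)
  interpret gibbs_family mu "A \<omega>" "B \<omega>" "R \<omega>" "c_A \<omega>" c_B "c_R \<omega>" by (rule elim)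
  show ?case unfolding avg_B_def by (rule abs_gibbs_avg_le[OF B_measurable B_bounded])
qed

lemma integrable_avg_B: "integrable Om (\<lambda>\<omega>. avg_B \<omega> u)"
  by (rule Om.integrable_if_AE_abs_le[OF _ AE_abs_avg_B_le]) measurable

lemma integrable_G_avg_phi:
  assumes k: "k \<in> J"
  shows "integrable Om (\<lambda>\<omega>. G k \<omega> * avg_phi k \<omega> u)"
proof (rule Bochner_Integration.integrable_bound[where f="\<lambda>\<omega>. c_phi * G k \<omega>"])
  show "integrable Om (\<lambda>\<omega>. c_phi * G k \<omega>)" using integrable_G[OF k] by simp
  show "AE \<omega> in Om. norm (G k \<omega> * avg_phi k \<omega> u) \<le> norm (c_phi * G k \<omega>)"
  proof (rule AE_I2)
    fix \<omega>
    have "\<bar>avg_phi k \<omega> u\<bar> \<le> \<bar>c_phi\<bar>" using abs_avg_phi_le[OF k, of \<omega> u] by linarith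
    then show "norm (G k \<omega> * avg_phi k \<omega> u) \<le> norm (c_phi * G k \<omega>)"
      by (simp add: abs_mult mult.commute[of "\<bar>c_phi\<bar>"] mult_left_mono)
  qed
qed measurable

lemma psi'_eq: "psi' \<omega> u = ((\<Sum>k\<in>J. G k \<omega> * avg_phi k \<omega> u) + 2 * u * avg_B \<omega> u) / n"
proof -
  obtain b r where "gibbs_family mu (A \<omega>) (B \<omega>) (R \<omega>) (c_A \<omega>) b r"
    using gibbs_family_at by blast
  then interpret gibbs_family mu "A \<omega>" "B \<omega>" "R \<omega>" "c_A \<omega>" b r .
  have "(\<integral>x. A \<omega> x * w u x \<partial>mu) = (\<integral>x. (\<Sum>k\<in>J. G k \<omega> * (phi k x * w u x)) \<partial>mu)"
    unfolding A_def by (simp add: sum_distrib_right mult.assoc)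
  also have "\<dots> = (\<Sum>k\<in>J. G k \<omega> * (\<integral>x. phi k x * w u x \<partial>mu))"
    using integrable_times_weight[OF phi_measurable phi_bounded]
    by (simp add: Bochner_Integration.integral_sum)
  finally have "avg u (A \<omega>) = (\<Sum>k\<in>J. G k \<omega> * avg_phi k \<omega> u)"
    unfolding gibbs_avg_def avg_phi_def by (simp add: sum_divide_distrib)
  then show ?thesis unfolding psi'_def dlog_partition_def avg_B_def by simp
qed

lemma A_resample:
  assumes k: "k \<in> J"
  shows "A (resample k \<omega> v) x = v * phi k x + (\<Sum>l\<in>J-{k}. G l \<omega> * phi l x)"
proof -
  have "A (resample k \<omega> v) x =
      G k (resample k \<omega> v) * phi k x + (\<Sum>l\<in>J-{k}. G l (resample k \<omega> v) * phi l x)"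
    unfolding A_def using finite_J k by (simp add: sum.remove)
  also have "(\<Sum>l\<in>J-{k}. G l (resample k \<omega> v) * phi l x) = (\<Sum>l\<in>J-{k}. G l \<omega> * phi l x)"
    by (rule sum.cong) (auto simp: G_resample_other[OF k])
  finally show ?thesis using G_resample[OF k] by simp
qed

text \<open>With the coordinate \<open>G k\<close> set to \<open>v\<close>, the Gibbs measure at \<open>u\<close> is the member \<open>u * v\<close> of a
  Gibbs family tilted by \<open>phi k\<close> alone, so \<open>avg_phi k\<close> is Lipschitz in \<open>v\<close>.\<close>

lemma avg_phi_resample_lipschitz:
  assumes k: "k \<in> J"
  shows "\<bar>avg_phi k (resample k \<omega> v) u - avg_phi k (resample k \<omega> v') u\<bar> \<le> c_phi\<^sup>2 * \<bar>u\<bar> * \<bar>v - v'\<bar>"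
proof -
  define Q where "Q x = u * (\<Sum>l\<in>J-{k}. G l \<omega> * phi l x) + u\<^sup>2 * B \<omega> x + R \<omega> x" for x
  have avg_phi_eq: "avg_phi k (resample k \<omega> v) u = gibbs_avg mu (phi k) (\<lambda>_. 0) Q (u * v) (phi k)" for v
  proof -
    have "gibbs_weight (A (resample k \<omega> v)) (B (resample k \<omega> v)) (R (resample k \<omega> v)) u
        = gibbs_weight (phi k) (\<lambda>_. 0) Q (u * v)"
      unfolding gibbs_weight_def Q_def fun_eq_iff A_resample[OF k] B_resample[OF k] R_resample[OF k]
      by (simp add: algebra_simps)
    then show ?thesis unfolding avg_phi_def gibbs_avg_def partition_fn_def by simp
  qed
  obtain b where b: "AE x in mu. \<bar>B \<omega> x\<bar> \<le> b" using B_bounded by blast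
  obtain r where r: "AE x in mu. \<bar>R \<omega> x\<bar> \<le> r" using R_bounded by blast
  have "AE x in mu. \<forall>l\<in>J. \<bar>phi l x\<bar> \<le> c_phi"
    using finite_J phi_bounded by (simp add: eventually_ball_finite)
  then have Q_bounded: "AE x in mu. \<bar>Q x\<bar> \<le> \<bar>u\<bar> * c_A \<omega> + u\<^sup>2 * \<bar>b\<bar> + \<bar>r\<bar>"
    using b r
  proof eventually_elim
    case (elim x)
    have "\<bar>u * (\<Sum>l\<in>J-{k}. G l \<omega> * phi l x)\<bar> \<le> \<bar>u\<bar> * c_A \<omega>"
      unfolding abs_mult by (rule mult_left_mono[OF abs_sum_G_phi_le[OF elim(1)]]) auto
    moreover have "\<bar>u\<^sup>2 * B \<omega> x\<bar> \<le> u\<^sup>2 * \<bar>b\<bar>"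
      unfolding abs_mult using elim(2) by (simp add: mult_left_mono)
    ultimately show ?case unfolding Q_def using elim(3) by linarith
  qed
  have "Q \<in> borel_measurable mu" unfolding Q_def using B_measurable' R_measurable' by measurable
  then interpret tilt: gibbs_family mu "phi k" "\<lambda>_. 0" Q c_phi 0 "\<bar>u\<bar> * c_A \<omega> + u\<^sup>2 * \<bar>b\<bar> + \<bar>r\<bar>"
    unfolding gibbs_family_def gibbs_family_axioms_def using prob_mu phi_bounded[OF k] Q_bounded by simp
  have "\<bar>tilt.avg (u * v) (phi k) - tilt.avg (u * v') (phi k)\<bar> \<le> c_phi\<^sup>2 * \<bar>u * v - u * v'\<bar>"
    by (rule tilt.gibbs_avg_lipschitz) simp
  also have "\<bar>u * v - u * v'\<bar> = \<bar>u\<bar> * \<bar>v - v'\<bar>" by (simp add: abs_mult[symmetric] right_diff_distrib)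
  finally show ?thesis unfolding avg_phi_eq by (simp add: mult.assoc)
qed

lemma abs_integral_G_avg_phi_le:
  assumes k: "k \<in> J"
  shows "\<bar>\<integral>\<omega>. G k \<omega> * avg_phi k \<omega> u \<partial>Om\<bar> \<le> c_phi\<^sup>2 * \<bar>u\<bar>"
proof -
  have "(\<integral>\<omega>. G k \<omega> * avg_phi k \<omega> u \<partial>Om) = (\<integral>\<omega>. \<integral>v. v * avg_phi k (resample k \<omega> v) u \<partial>gauss \<partial>Om)"
    using integral_resampling[OF prob_space_imp_sigma_finite[OF prob_Om] sigma_finite_gauss
        resampling_G[OF k] integrable_G_avg_phi[OF k]]
    by (simp add: G_resample[OF k])
  moreover have "\<bar>\<integral>\<omega>. \<integral>v. v * avg_phi k (resample k \<omega> v) u \<partial>gauss \<partial>Om\<bar> \<le> c_phi\<^sup>2 * \<bar>u\<bar>"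
  proof (rule Om.abs_integral_le_if_AE_abs_le, rule AE_I2)
    fix \<omega>
    define g where "g v = avg_phi k (resample k \<omega> v) u" for v
    have lip: "\<bar>g v - g v'\<bar> \<le> c_phi\<^sup>2 * \<bar>u\<bar> * \<bar>v - v'\<bar>" for v v'
      unfolding g_def by (rule avg_phi_resample_lipschitz[OF k])
    then have "(c_phi\<^sup>2 * \<bar>u\<bar>)-lipschitz_on UNIV g"
      unfolding lipschitz_on_def dist_real_def by simp
    then have "continuous_on UNIV g" by (rule lipschitz_on_continuous_on)
    then have "g \<in> borel_measurable borel" by (rule borel_measurable_continuous_onI)
    then have "\<bar>\<integral>v. v * g v \<partial>gauss\<bar> \<le> c_phi\<^sup>2 * \<bar>u\<bar>"
      by (rule abs_gauss_integral_times_le) (use lip[of _ 0] in simp)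
    then show "\<bar>\<integral>v. v * avg_phi k (resample k \<omega> v) u \<partial>gauss\<bar> \<le> c_phi\<^sup>2 * \<bar>u\<bar>"
      unfolding g_def .
  qed
  ultimately show ?thesis by simp
qed

lemma abs_Phi'_le: "\<bar>Phi' u\<bar> \<le> c_Phi * \<bar>u\<bar>"
proof -
  have "Phi' u = (\<integral>\<omega>. (\<Sum>k\<in>J. G k \<omega> * avg_phi k \<omega> u) + 2 * u * avg_B \<omega> u \<partial>Om) / n"
    unfolding Phi'_def psi'_eq by simp
  also have "\<dots> = ((\<Sum>k\<in>J. \<integral>\<omega>. G k \<omega> * avg_phi k \<omega> u \<partial>Om) + 2 * u * (\<integral>\<omega>. avg_B \<omega> u \<partial>Om)) / n"
    using integrable_G_avg_phi integrable_avg_B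
    by (simp add: Bochner_Integration.integrable_sum Bochner_Integration.integral_sum)
  finally have Phi'_eq: "Phi' u = \<dots>" .
  have "\<bar>\<Sum>k\<in>J. \<integral>\<omega>. G k \<omega> * avg_phi k \<omega> u \<partial>Om\<bar> \<le> (\<Sum>k\<in>J. \<bar>\<integral>\<omega>. G k \<omega> * avg_phi k \<omega> u \<partial>Om\<bar>)"
    by (rule sum_abs)
  also have "\<dots> \<le> (\<Sum>k\<in>J. c_phi\<^sup>2 * \<bar>u\<bar>)"
    by (rule sum_mono) (rule abs_integral_G_avg_phi_le)
  finally have "\<bar>\<Sum>k\<in>J. \<integral>\<omega>. G k \<omega> * avg_phi k \<omega> u \<partial>Om\<bar> \<le> (\<Sum>k\<in>J. c_phi\<^sup>2 * \<bar>u\<bar>)" .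
  moreover have "\<bar>2 * u * (\<integral>\<omega>. avg_B \<omega> u \<partial>Om)\<bar> \<le> 2 * \<bar>u\<bar> * c_B"
    using Om.abs_integral_le_if_AE_abs_le[OF AE_abs_avg_B_le] by (simp add: abs_mult mult_left_mono)
  ultimately have "\<bar>Phi' u\<bar> \<le> (real (card J) * (c_phi\<^sup>2 * \<bar>u\<bar>) + 2 * \<bar>u\<bar> * c_B) / n"
    unfolding Phi'_eq using n_pos by (simp add: abs_divide divide_right_mono)
  also have "\<dots> = c_Phi * \<bar>u\<bar>" by (simp add: algebra_simps)
  finally show ?thesis .
qed

lemma Phi'_div_tendsto: "((\<lambda>u. Phi' u / u) \<longlongrightarrow> Phi'' 0) (at_right 0)"
proof -
  have "Phi' 0 = 0" using abs_Phi'_le[of 0] by simp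
  then have "((\<lambda>u. Phi' u / u) \<longlongrightarrow> Phi'' 0) (at 0)"
    using Phi'_has_derivative[of 0] by (simp add: has_field_derivative_iff)
  then show ?thesis by (rule filterlim_mono) (simp_all add: at_le)
qed

lemma abs_Phi''_0_le: "\<bar>Phi'' 0\<bar> \<le> c_Phi"
proof (rule tendsto_upperbound[OF tendsto_rabs[OF Phi'_div_tendsto]])
  have "eventually (\<lambda>u::real. 0 < u) (at_right 0)" by (simp add: eventually_at_filter)
  then show "\<forall>\<^sub>F u in at_right 0. \<bar>Phi' u / u\<bar> \<le> c_Phi"
  proof eventually_elim
    case (elim u)
    then show ?case using abs_Phi'_le[of u] by (simp add: abs_divide divide_le_eq)
  qed
qed simp

lemma Phi_sqrt_has_derivative_pos:
  assumes "0 < t"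
  shows "((\<lambda>s. Phi (sqrt s)) has_real_derivative Phi' (sqrt t) / (2 * sqrt t)) (at t)"
    and "\<bar>Phi' (sqrt t) / (2 * sqrt t)\<bar> \<le> c_Phi / 2"
proof -
  have eq: "Phi' (sqrt t) * (inverse (sqrt t) / 2) = Phi' (sqrt t) / (2 * sqrt t)"
    by (simp add: inverse_eq_divide)
  show "((\<lambda>s. Phi (sqrt s)) has_real_derivative Phi' (sqrt t) / (2 * sqrt t)) (at t)"
    unfolding eq[symmetric] by (rule DERIV_chain2[OF Phi_has_derivative DERIV_real_sqrt[OF assms]])
  have "\<bar>Phi' (sqrt t) / (2 * sqrt t)\<bar> = \<bar>Phi' (sqrt t)\<bar> / (2 * sqrt t)"
    using assms by (simp add: abs_divide)
  also have "\<dots> \<le> c_Phi * sqrt t / (2 * sqrt t)"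
    using abs_Phi'_le[of "sqrt t"] assms by (intro divide_right_mono) simp_all
  also have "\<dots> = c_Phi / 2" using assms by simp
  finally show "\<bar>Phi' (sqrt t) / (2 * sqrt t)\<bar> \<le> c_Phi / 2" .
qed

lemma Phi_diff_div_square_tendsto: "((\<lambda>u. (Phi u - Phi 0) / u\<^sup>2) \<longlongrightarrow> Phi'' 0 / 2) (at_right 0)"
proof (rule lhopital_right_0[where f'=Phi' and g'="\<lambda>u. 2 * u"])
  have pos: "eventually (\<lambda>u::real. 0 < u) (at_right 0)" by (simp add: eventually_at_filter)
  have "(Phi \<longlongrightarrow> Phi 0) (at_right 0)"
    using DERIV_isCont[OF Phi_has_derivative[of 0]] by (simp add: isCont_def filterlim_mono at_le)
  then show "((\<lambda>u. Phi u - Phi 0) \<longlongrightarrow> 0) (at_right 0)"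
    by (simp add: LIM_zero)
  show "((\<lambda>u::real. u\<^sup>2) \<longlongrightarrow> 0) (at_right 0)"
    using tendsto_power[OF tendsto_ident_at[of 0 "{0<..}"], of 2] by simp
  show "eventually (\<lambda>u::real. u\<^sup>2 \<noteq> 0) (at_right 0)" "eventually (\<lambda>u::real. 2 * u \<noteq> 0) (at_right 0)"
    using pos by (auto elim: eventually_mono)
  show "eventually (\<lambda>u. ((\<lambda>u. Phi u - Phi 0) has_real_derivative Phi' u) (at u)) (at_right 0)"
    by (auto intro!: always_eventually derivative_eq_intros Phi_has_derivative)
  show "eventually (\<lambda>u. ((\<lambda>u::real. u\<^sup>2) has_real_derivative 2 * u) (at u)) (at_right 0)"
    by (auto intro!: always_eventually derivative_eq_intros)
  show "((\<lambda>u. Phi' u / (2 * u)) \<longlongrightarrow> Phi'' 0 / 2) (at_right 0)"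
    using tendsto_divide[OF Phi'_div_tendsto tendsto_const[of 2]] by (simp add: mult.commute)
qed

lemma Phi_sqrt_has_derivative_0:
  "((\<lambda>s. Phi (sqrt s)) has_real_derivative Phi'' 0 / 2) (at 0 within {0..})"
proof -
  have pos: "eventually (\<lambda>u::real. 0 < u) (at_right 0)" by (simp add: eventually_at_filter)
  have "filterlim sqrt (at_right 0) (at_right (0::real))"
    unfolding filterlim_at
    using tendsto_real_sqrt[OF tendsto_ident_at[of "0::real" "{0<..}"]] pos
    by (auto elim: eventually_mono)
  from filterlim_compose[OF Phi_diff_div_square_tendsto this]
  have "((\<lambda>s. (Phi (sqrt s) - Phi 0) / (sqrt s)\<^sup>2) \<longlongrightarrow> Phi'' 0 / 2) (at_right 0)" by simp
  then have "((\<lambda>s. (Phi (sqrt s) - Phi (sqrt 0)) / (s - 0)) \<longlongrightarrow> Phi'' 0 / 2) (at_right 0)"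
    by (rule filterlim_cong[THEN iffD1, rotated 3]) (use pos in \<open>auto elim: eventually_mono\<close>)
  then show ?thesis by (simp add: has_field_derivative_iff at_within_Ici_at_right)
qed

lemma Phi_sqrt_has_derivative:
  assumes "0 \<le> t"
  obtains D where "((\<lambda>s. Phi (sqrt s)) has_real_derivative D) (at t within {0..})" "\<bar>D\<bar> \<le> c_Phi / 2"
proof (cases "t = 0")
  case True
  have "\<bar>Phi'' 0 / 2\<bar> = \<bar>Phi'' 0\<bar> / 2" by simp
  also have "\<dots> \<le> c_Phi / 2" by (rule divide_right_mono[OF abs_Phi''_0_le]) simp
  finally have "\<bar>Phi'' 0 / 2\<bar> \<le> c_Phi / 2" .
  then show ?thesis using that Phi_sqrt_has_derivative_0 True by blast
next
  case False
  with assms have "0 < t" by simp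
  then show ?thesis
    using that has_field_derivative_at_within[OF Phi_sqrt_has_derivative_pos(1)] Phi_sqrt_has_derivative_pos(2)
    by blast
qed

end

section \<open>Vectors and matrices of size \<open>N\<close>\<close>

lemma norm_N_eq_L2_set: "norm_N N x = L2_set x {..<N}"
  unfolding norm_N_def inner_N_def L2_set_def by (simp add: power2_eq_square)

lemma norm_N_nonneg: "0 \<le> norm_N N x"
  unfolding norm_N_eq_L2_set by (rule L2_set_nonneg)

lemma inner_N_self_eq: "inner_N N x x = (norm_N N x)\<^sup>2"
  unfolding norm_N_def inner_N_def by (simp add: sum_nonneg)

lemma inner_N_commute: "inner_N N x y = inner_N N y x"
  unfolding inner_N_def by (simp add: mult.commute)

lemma abs_inner_N_le: "\<bar>inner_N N x y\<bar> \<le> norm_N N x * norm_N N y"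
proof -
  have "\<bar>inner_N N x y\<bar> \<le> (\<Sum>i<N. \<bar>x i\<bar> * \<bar>y i\<bar>)"
    unfolding inner_N_def by (metis (no_types, lifting) abs_mult sum.cong sum_abs)
  also have "\<dots> \<le> norm_N N x * norm_N N y" unfolding norm_N_eq_L2_set by (rule L2_set_mult_ineq)
  finally show ?thesis .
qed

lemma abs_le_norm_N: "j < N \<Longrightarrow> \<bar>x j\<bar> \<le> norm_N N x"
proof -
  assume j: "j < N"
  have "\<bar>x j\<bar> \<le> L2_set (\<lambda>i. \<bar>x i\<bar>) {..<N}" by (rule member_le_L2_set) (use j in auto)
  also have "L2_set (\<lambda>i. \<bar>x i\<bar>) {..<N} = L2_set x {..<N}" by (simp add: L2_set_def)
  finally show ?thesis unfolding norm_N_eq_L2_set .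
qed

lemma norm_N_le_sum_abs: "norm_N N x \<le> (\<Sum>i<N. \<bar>x i\<bar>)"
  unfolding norm_N_eq_L2_set by (rule L2_set_le_sum_abs)

lemma norm_N_square_le:
  assumes "\<forall>i<N. \<bar>x i\<bar> \<le> K"
  shows "(norm_N N x)\<^sup>2 \<le> real N * K\<^sup>2"
proof -
  have "(norm_N N x)\<^sup>2 = (\<Sum>i<N. (x i)\<^sup>2)" unfolding inner_N_self_eq[symmetric] inner_N_def by (simp add: power2_eq_square)
  also have "\<dots> \<le> (\<Sum>i<N. K\<^sup>2)"
    by (rule sum_mono) (use assms in \<open>auto intro: square_le_if_abs_le\<close>)
  finally show ?thesis by simp
qed

lemma norm_N_le:
  assumes "\<forall>i<N. \<bar>x i\<bar> \<le> K"
  shows "norm_N N x \<le> sqrt (real N) * K"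
proof -
  have K: "0 \<le> K \<or> N = 0" using assms by (metis abs_ge_zero order.trans neq0_conv)
  show ?thesis
  proof (cases "N = 0")
    case True then show ?thesis by (simp add: norm_N_def inner_N_def)
  next
    case False
    then have K0: "0 \<le> K" using K by simp
    have "norm_N N x = sqrt ((norm_N N x)\<^sup>2)" using norm_N_nonneg by simp
    also have "\<dots> \<le> sqrt (real N * K\<^sup>2)" by (rule real_sqrt_le_mono[OF norm_N_square_le[OF assms]])
    also have "\<dots> = sqrt (real N) * K" using K0 by (simp add: real_sqrt_mult)
    finally show ?thesis .
  qed
qed

lemma norm_matvec_N_le_sum_abs: "norm_N N (matvec_N N W x) \<le> (\<Sum>i<N. \<Sum>j<N. \<bar>W i j\<bar>) * norm_N N x"
proof -
  have "norm_N N (matvec_N N W x) \<le> (\<Sum>i<N. \<bar>matvec_N N W x i\<bar>)" by (rule norm_N_le_sum_abs)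
  also have "\<dots> \<le> (\<Sum>i<N. (\<Sum>j<N. \<bar>W i j\<bar>) * norm_N N x)"
  proof (rule sum_mono)
    fix i assume "i \<in> {..<N}"
    have "\<bar>matvec_N N W x i\<bar> \<le> (\<Sum>j<N. \<bar>W i j * x j\<bar>)" unfolding matvec_N_def by (rule sum_abs)
    also have "\<dots> \<le> (\<Sum>j<N. \<bar>W i j\<bar> * norm_N N x)"
      by (rule sum_mono) (auto simp: abs_mult intro: mult_left_mono abs_le_norm_N)
    finally show "\<bar>matvec_N N W x i\<bar> \<le> (\<Sum>j<N. \<bar>W i j\<bar>) * norm_N N x" by (simp add: sum_distrib_right)
  qed
  finally show ?thesis by (simp add: sum_distrib_right)
qed

lemma bdd_above_opnorm_N: "bdd_above {norm_N N (matvec_N N W x) | x. norm_N N x \<le> 1}"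
proof (rule bdd_aboveI)
  fix y assume "y \<in> {norm_N N (matvec_N N W x) | x. norm_N N x \<le> 1}"
  then obtain x where x: "y = norm_N N (matvec_N N W x)" "norm_N N x \<le> 1" by blast
  have "y \<le> (\<Sum>i<N. \<Sum>j<N. \<bar>W i j\<bar>) * norm_N N x" using x norm_matvec_N_le_sum_abs by simp
  also have "\<dots> \<le> (\<Sum>i<N. \<Sum>j<N. \<bar>W i j\<bar>) * 1" by (rule mult_left_mono) (use x in \<open>auto intro: sum_nonneg\<close>)
  finally show "y \<le> (\<Sum>i<N. \<Sum>j<N. \<bar>W i j\<bar>)" by simp
qed

lemma opnorm_N_nonneg: "0 \<le> opnorm_N N W"
proof -
  have "norm_N N (matvec_N N W (\<lambda>_. 0)) \<le> opnorm_N N W"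
    unfolding opnorm_N_def by (rule cSup_upper[OF _ bdd_above_opnorm_N]) (auto simp: norm_N_def inner_N_def)
  moreover have "norm_N N (matvec_N N W (\<lambda>_. 0)) = 0" by (simp add: norm_N_def inner_N_def matvec_N_def)
  ultimately show ?thesis by simp
qed

lemma matvec_N_scale: "matvec_N N W (\<lambda>i. c * x i) = (\<lambda>i. c * matvec_N N W x i)"
  unfolding matvec_N_def by (simp add: sum_distrib_left mult.left_commute)

lemma norm_N_scale: "norm_N N (\<lambda>i. c * x i) = \<bar>c\<bar> * norm_N N x"
proof -
  have "inner_N N (\<lambda>i. c * x i) (\<lambda>i. c * x i) = c\<^sup>2 * inner_N N x x"
    unfolding inner_N_def by (simp add: sum_distrib_left power2_eq_square algebra_simps)
  then show ?thesis unfolding norm_N_def by (simp add: real_sqrt_mult)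
qed

lemma norm_matvec_N_le_opnorm: "norm_N N (matvec_N N W x) \<le> opnorm_N N W * norm_N N x"
proof (cases "norm_N N x = 0")
  case True
  then have "norm_N N (matvec_N N W x) \<le> 0" using norm_matvec_N_le_sum_abs[of N W x] by simp
  then show ?thesis using True by simp
next
  case False
  then have nx: "0 < norm_N N x" using norm_N_nonneg[of N x] by simp
  define y where "y i = (1 / norm_N N x) * x i" for i
  have ny: "norm_N N y = 1" unfolding y_def norm_N_scale using nx by simp
  have "norm_N N (matvec_N N W y) \<le> opnorm_N N W"
    unfolding opnorm_N_def by (rule cSup_upper[OF _ bdd_above_opnorm_N]) (use ny in auto)
  moreover have "norm_N N (matvec_N N W y) = norm_N N (matvec_N N W x) / norm_N N x"
    unfolding y_def matvec_N_scale norm_N_scale using nx by simp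
  ultimately show ?thesis using nx by (simp add: divide_le_eq mult.commute)
qed

lemma abs_quadratic_form_le_opnorm: "\<bar>inner_N N x (matvec_N N W x)\<bar> \<le> opnorm_N N W * (norm_N N x)\<^sup>2"
proof -
  have "\<bar>inner_N N x (matvec_N N W x)\<bar> \<le> norm_N N x * norm_N N (matvec_N N W x)" by (rule abs_inner_N_le)
  also have "\<dots> \<le> norm_N N x * (opnorm_N N W * norm_N N x)"
    by (rule mult_left_mono[OF norm_matvec_N_le_opnorm norm_N_nonneg])
  finally show ?thesis by (simp add: power2_eq_square mult.commute mult.left_commute)
qed

lemma quadratic_form_eq_sum: "inner_N N x (matvec_N N W x) = (\<Sum>p\<in>{..<N} \<times> {..<N}. W (fst p) (snd p) * (x (fst p) * x (snd p)))"
proof -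
  have "inner_N N x (matvec_N N W x) = (\<Sum>i<N. \<Sum>j<N. W i j * (x i * x j))"
    unfolding inner_N_def matvec_N_def by (simp add: sum_distrib_left algebra_simps)
  also have "\<dots> = (\<Sum>(i,j)\<in>{..<N} \<times> {..<N}. W i j * (x i * x j))" by (rule sum.cartesian_product)
  also have "\<dots> = (\<Sum>p\<in>{..<N} \<times> {..<N}. W (fst p) (snd p) * (x (fst p) * x (snd p)))"
    by (simp add: split_beta)
  finally show ?thesis .
qed

lemma abs_inner_N_le_sum_abs:
  assumes "\<forall>i<N. \<bar>x i\<bar> \<le> K"
  shows "\<bar>inner_N N x y\<bar> \<le> K * (\<Sum>i<N. \<bar>y i\<bar>)"
proof -
  have "\<bar>inner_N N x y\<bar> \<le> (\<Sum>i<N. \<bar>x i * y i\<bar>)" unfolding inner_N_def by (rule sum_abs)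
  also have "\<dots> \<le> (\<Sum>i<N. K * \<bar>y i\<bar>)"
    by (rule sum_mono) (use assms in \<open>auto simp: abs_mult intro: mult_right_mono\<close>)
  finally show ?thesis by (simp add: sum_distrib_left)
qed

lemma abs_inner_N_le_bounded:
  assumes "\<forall>i<N. \<bar>x i\<bar> \<le> K" "\<forall>i<N. \<bar>y i\<bar> \<le> K"
  shows "\<bar>inner_N N x y\<bar> \<le> real N * K\<^sup>2"
proof -
  have "\<bar>inner_N N x y\<bar> \<le> K * (\<Sum>i<N. \<bar>y i\<bar>)" by (rule abs_inner_N_le_sum_abs[OF assms(1)])
  also have "\<dots> \<le> K * (\<Sum>i<N. K)"
  proof (cases "N = 0")
    case False
    then have "0 \<le> K" using assms(1) by (metis abs_ge_zero order.trans neq0_conv)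
    then show ?thesis by (intro mult_left_mono sum_mono) (use assms(2) in auto)
  qed simp
  finally show ?thesis by (simp add: power2_eq_square ac_simps)
qed

lemma norm_N_pow4_le:
  assumes "\<forall>i<N. \<bar>x i\<bar> \<le> K"
  shows "(norm_N N x)^4 \<le> (real N * K\<^sup>2)\<^sup>2"
proof -
  have "(norm_N N x)^4 = ((norm_N N x)\<^sup>2)\<^sup>2" by simp
  also have "\<dots> \<le> (real N * K\<^sup>2)\<^sup>2" by (rule power_mono[OF norm_N_square_le[OF assms]]) simp
  finally show ?thesis .
qed

lemma abs_quadratic_form_le_sum_abs:
  assumes "\<forall>i<N. \<bar>x i\<bar> \<le> K"
  shows "\<bar>inner_N N x (matvec_N N W x)\<bar> \<le> K\<^sup>2 * (\<Sum>p\<in>{..<N}\<times>{..<N}. \<bar>W (fst p) (snd p)\<bar>)"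
proof -
  have "\<bar>inner_N N x (matvec_N N W x)\<bar> \<le> (\<Sum>p\<in>{..<N}\<times>{..<N}. \<bar>W (fst p) (snd p) * (x (fst p) * x (snd p))\<bar>)"
    unfolding quadratic_form_eq_sum by (rule sum_abs)
  also have "\<dots> \<le> (\<Sum>p\<in>{..<N}\<times>{..<N}. K\<^sup>2 * \<bar>W (fst p) (snd p)\<bar>)"
  proof (rule sum_mono)
    fix p assume p: "p \<in> {..<N}\<times>{..<N}"
    have "\<bar>x (fst p) * x (snd p)\<bar> \<le> K * K"
      unfolding abs_mult by (rule mult_mono) (use p assms in auto)
    note xx = this
    have "\<bar>W (fst p) (snd p) * (x (fst p) * x (snd p))\<bar> = \<bar>W (fst p) (snd p)\<bar> * \<bar>x (fst p) * x (snd p)\<bar>"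
      by (rule abs_mult)
    also have "\<dots> \<le> \<bar>W (fst p) (snd p)\<bar> * (K * K)" by (rule mult_left_mono[OF xx]) simp
    also have "\<dots> = K\<^sup>2 * \<bar>W (fst p) (snd p)\<bar>" by (simp add: power2_eq_square)
    finally show "\<bar>W (fst p) (snd p) * (x (fst p) * x (snd p))\<bar> \<le> K\<^sup>2 * \<bar>W (fst p) (snd p)\<bar>" .
  qed
  finally show ?thesis by (simp add: sum_distrib_left)
qed

section \<open>The spiked model\<close>

lemma measurable_PiM_coordinate:
  fixes Q :: "real measure"
  assumes "sets Q = sets borel"
  shows "(\<lambda>x. x i) \<in> borel_measurable (PiM I (\<lambda>_. Q))"
proof (cases "i \<in> I")
  case True
  have "(\<lambda>x. x i) \<in> measurable (PiM I (\<lambda>_. Q)) Q" by (rule measurable_component_singleton[OF True])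
  then show ?thesis by (simp add: measurable_cong_sets[OF refl assms])
next
  case False
  have "(\<lambda>x. x i) \<in> borel_measurable (PiM I (\<lambda>_. Q)) \<longleftrightarrow> (\<lambda>x. undefined :: real) \<in> borel_measurable (PiM I (\<lambda>_. Q))"
    by (intro Sigma_Algebra.measurable_cong) (use False in \<open>auto simp: space_PiM PiE_def extensional_def\<close>)
  then show ?thesis by simp
qed

lemma measurable_PiM_PiM_coordinate:
  fixes Q :: "real measure"
  assumes "sets Q = sets borel"
  shows "(\<lambda>x. x i j) \<in> borel_measurable (PiM I (\<lambda>_. PiM I (\<lambda>_. Q)))"
proof (cases "i \<in> I")
  case True
  have "(\<lambda>x. x i) \<in> measurable (PiM I (\<lambda>_. PiM I (\<lambda>_. Q))) (PiM I (\<lambda>_. Q))"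
    by (rule measurable_component_singleton[OF True])
  from measurable_comp[OF this measurable_PiM_coordinate[OF assms, of j I]] show ?thesis by (simp add: comp_def)
next
  case False
  have "(\<lambda>x. x i j) \<in> borel_measurable (PiM I (\<lambda>_. PiM I (\<lambda>_. Q))) \<longleftrightarrow> (\<lambda>x. undefined j :: real) \<in> borel_measurable (PiM I (\<lambda>_. PiM I (\<lambda>_. Q)))"
    by (intro Sigma_Algebra.measurable_cong) (use False in \<open>auto simp: space_PiM PiE_def extensional_def\<close>)
  then show ?thesis by simp
qed

type_synonym disorder = "(nat \<Rightarrow> real) \<times> (nat \<Rightarrow> nat \<Rightarrow> real) \<times> (nat \<Rightarrow> real)"

definition deriv_bound :: "real \<Rightarrow> real" where
  "deriv_bound K = 2 * K^4 + 2 * K\<^sup>2 + K"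

locale spiked_wigner =
  fixes P :: "real measure" and N :: nat and K :: real
  assumes prob_P: "prob_space P" and sets_P: "sets P = sets borel"
    and P_bounded: "AE x in P. \<bar>x\<bar> \<le> K" and N_ge_1: "1 \<le> N"
begin

abbreviation "PN \<equiv> P_N P N"
abbreviation "Wlaw \<equiv> PiM {..<N} (\<lambda>_. PiM {..<N} (\<lambda>_. gauss))"
abbreviation "zlaw \<equiv> PiM {..<N} (\<lambda>_. gauss)"
abbreviation "Om \<equiv> Omega P N"
abbreviation "Jt \<equiv> {..<N} \<times> {..<N}"

lemma K_nonneg: "0 \<le> K"
  using P_bounded by (rule prob_space.nonneg_if_AE_abs_le[OF prob_P])

lemma N_pos: "0 < real N"
  using N_ge_1 by simp

lemma prob_zlaw: "prob_space zlaw" by (rule prob_space_PiM) (rule prob_space_gauss)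
lemma prob_Wlaw: "prob_space Wlaw" by (rule prob_space_PiM) (rule prob_zlaw)
lemma prob_PN: "prob_space PN" unfolding P_N_def by (rule prob_space_PiM) (rule prob_P)
lemma prob_Om: "prob_space Om"
  unfolding Omega_def by (intro prob_space_pair prob_PN prob_Wlaw prob_zlaw)

lemma sigma_finite_zlaw: "sigma_finite_measure zlaw"
  by (rule prob_space_imp_sigma_finite[OF prob_zlaw])

lemma sigma_finite_Wz: "sigma_finite_measure (Wlaw \<Otimes>\<^sub>M zlaw)"
  by (rule prob_space_imp_sigma_finite[OF prob_space_pair[OF prob_Wlaw prob_zlaw]])

lemma x_measurable[measurable]: "(\<lambda>x. x i) \<in> borel_measurable PN"
  unfolding P_N_def by (rule measurable_PiM_coordinate[OF sets_P])

lemma W_measurable[measurable]: "(\<lambda>W. W i j) \<in> borel_measurable Wlaw"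
  by (rule measurable_PiM_PiM_coordinate) simp

lemma z_measurable[measurable]: "(\<lambda>z. z i) \<in> borel_measurable zlaw"
  by (rule measurable_PiM_coordinate) simp

lemma AE_PN_bounded: "AE x in PN. \<forall>i<N. \<bar>x i\<bar> \<le> K"
proof -
  have "\<forall>i\<in>{..<N}. AE x in PN. \<bar>x i\<bar> \<le> K"
    unfolding P_N_def using AE_PiM_component[of "{..<N}" "\<lambda>_. P" _ "\<lambda>y. \<bar>y\<bar> \<le> K"] prob_P P_bounded
    by auto
  then have "AE x in PN. \<forall>i\<in>{..<N}. \<bar>x i\<bar> \<le> K" by (simp add: eventually_ball_finite)
  then show ?thesis by (rule eventually_mono) auto
qed

lemma AE_xbar_bounded: "AE \<omega> in Om. \<forall>i<N. \<bar>fst \<omega> i\<bar> \<le> K"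
proof -
  have d: "distr Om PN fst = PN"
    unfolding Omega_def by (rule prob_space.distr_pair_fst[OF prob_space_pair[OF prob_Wlaw prob_zlaw]])
  have "AE x in distr Om PN fst. \<forall>i<N. \<bar>x i\<bar> \<le> K" by (subst d) (rule AE_PN_bounded)
  then show ?thesis by (rule AE_distrD[rotated]) (simp add: Omega_def)
qed

lemma ex_AE_bound:
  fixes f :: "(nat \<Rightarrow> real) \<Rightarrow> real"
  assumes "\<And>M x. \<forall>i<N. \<bar>x i\<bar> \<le> M \<Longrightarrow> \<forall>i<N. \<bar>xbar i\<bar> \<le> M \<Longrightarrow> \<bar>f x\<bar> \<le> g M"
  shows "\<exists>b. AE x in PN. \<bar>f x\<bar> \<le> b"
proof -
  define M where "M = max K (Max ((\<lambda>i. \<bar>xbar i\<bar>) ` {..<N}))"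
  have xbar: "\<forall>i<N. \<bar>xbar i\<bar> \<le> M" unfolding M_def by (auto intro: max.coboundedI2)
  have "AE x in PN. \<bar>f x\<bar> \<le> g M"
    using AE_PN_bounded
  proof eventually_elim
    case (elim x)
    then have "\<forall>i<N. \<bar>x i\<bar> \<le> M" unfolding M_def by (auto intro: max.coboundedI1)
    then show ?case using xbar by (rule assms)
  qed
  then show ?thesis by blast
qed

lemma AE_AE_bound:
  fixes f :: "disorder \<Rightarrow> (nat \<Rightarrow> real) \<Rightarrow> real"
  assumes "\<And>\<omega> x. \<forall>i<N. \<bar>x i\<bar> \<le> K \<Longrightarrow> \<forall>i<N. \<bar>fst \<omega> i\<bar> \<le> K \<Longrightarrow> \<bar>f \<omega> x\<bar> \<le> g \<omega>"
  shows "AE \<omega> in Om. AE x in PN. \<bar>f \<omega> x\<bar> \<le> g \<omega>"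
  using AE_xbar_bounded
proof eventually_elim
  case (elim \<omega>)
  from AE_PN_bounded show ?case
    by eventually_elim (rule assms[OF _ elim])
qed

lemma resampling_W:
  assumes "i < N" "j < N"
  shows "resampling Om gauss (\<lambda>\<omega> w. (fst \<omega>, ((fst (snd \<omega>))(i := (fst (snd \<omega>) i)(j := w)), snd (snd \<omega>))))"
proof -
  have z: "resampling zlaw gauss (\<lambda>x w. x(j := w))"
    by (rule resampling_PiM_component[OF prob_space_gauss]) (use assms in auto)
  have "resampling Wlaw gauss (\<lambda>x w. x(i := (x i)(j := w)))"
    by (rule resampling_PiM_nested[OF prob_zlaw sigma_finite_gauss _ _ z]) (use assms in auto)
  from resampling_pair_fst[OF sigma_finite_zlaw sigma_finite_gauss this]
  have "resampling (Wlaw \<Otimes>\<^sub>M zlaw) gauss (\<lambda>p w. ((fst p)(i := (fst p i)(j := w)), snd p))"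
    by simp
  from resampling_pair_snd[OF sigma_finite_Wz sigma_finite_gauss this, of PN] show ?thesis
    unfolding Omega_def by simp
qed

lemma resampling_z:
  assumes "i < N"
  shows "resampling Om gauss (\<lambda>\<omega> w. (fst \<omega>, (fst (snd \<omega>), (snd (snd \<omega>))(i := w))))"
proof -
  have "resampling zlaw gauss (\<lambda>x w. x(i := w))"
    by (rule resampling_PiM_component[OF prob_space_gauss]) (use assms in auto)
  from resampling_pair_snd[OF sigma_finite_zlaw sigma_finite_gauss this, of Wlaw]
  have "resampling (Wlaw \<Otimes>\<^sub>M zlaw) gauss (\<lambda>p w. (fst p, (snd p)(i := w)))"
    by simp
  from resampling_pair_snd[OF sigma_finite_Wz sigma_finite_gauss this, of PN] show ?thesis
    unfolding Omega_def by simp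
qed

lemma xbar_measurable_Om[measurable]: "(\<lambda>\<omega>. fst \<omega> i) \<in> borel_measurable Om"
  unfolding Omega_def by measurable

lemma W_measurable_Om[measurable]: "(\<lambda>\<omega>. fst (snd \<omega>) i j) \<in> borel_measurable Om"
  unfolding Omega_def by measurable

lemma z_measurable_Om[measurable]: "(\<lambda>\<omega>. snd (snd \<omega>) i) \<in> borel_measurable Om"
  unfolding Omega_def by measurable

lemma integrable_W: "i < N \<Longrightarrow> j < N \<Longrightarrow> integrable Om (\<lambda>\<omega>. fst (snd \<omega>) i j)"
  by (rule integrable_resampled_coordinate(2)[OF prob_Om resampling_W[of i j]]) auto

lemma integrable_z: "i < N \<Longrightarrow> integrable Om (\<lambda>\<omega>. snd (snd \<omega>) i)"
  by (rule integrable_resampled_coordinate(2)[OF prob_Om resampling_z[of i]]) auto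

definition A_t :: "disorder \<Rightarrow> (nat \<Rightarrow> real) \<Rightarrow> real" where
  "A_t \<omega> x = inner_N N x (matvec_N N (fst (snd \<omega>)) x) / sqrt (real N)"
definition W_entry :: "nat \<times> nat \<Rightarrow> disorder \<Rightarrow> real" where
  "W_entry p \<omega> = fst (snd \<omega>) (fst p) (snd p)"
definition spin_pair :: "nat \<times> nat \<Rightarrow> (nat \<Rightarrow> real) \<Rightarrow> real" where
  "spin_pair p x = x (fst p) * x (snd p) / sqrt (real N)"
definition B_t :: "disorder \<Rightarrow> (nat \<Rightarrow> real) \<Rightarrow> real" where
  "B_t \<omega> x = (inner_N N x (fst \<omega>))\<^sup>2 / real N - (norm_N N x)^4 / (2 * real N)"
definition R_t :: "real \<Rightarrow> disorder \<Rightarrow> (nat \<Rightarrow> real) \<Rightarrow> real" where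
  "R_t h \<omega> x = sqrt h * inner_N N (snd (snd \<omega>)) x + h * inner_N N x (fst \<omega>) - h / 2 * (norm_N N x)\<^sup>2"
definition resample_W :: "nat \<times> nat \<Rightarrow> disorder \<Rightarrow> real \<Rightarrow> disorder" where
  "resample_W p \<omega> w = (fst \<omega>, ((fst (snd \<omega>))(fst p := (fst (snd \<omega>) (fst p))(snd p := w)), snd (snd \<omega>)))"
definition c_R_t :: "real \<Rightarrow> disorder \<Rightarrow> real" where
  "c_R_t h \<omega> = sqrt h * K * (\<Sum>i<N. \<bar>snd (snd \<omega>) i\<bar>) + 3/2 * h * real N * K\<^sup>2"

definition A_h :: "disorder \<Rightarrow> (nat \<Rightarrow> real) \<Rightarrow> real" where
  "A_h \<omega> x = inner_N N (snd (snd \<omega>)) x"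
definition z_entry :: "nat \<Rightarrow> disorder \<Rightarrow> real" where
  "z_entry i \<omega> = snd (snd \<omega>) i"
definition spin :: "nat \<Rightarrow> (nat \<Rightarrow> real) \<Rightarrow> real" where
  "spin i x = x i"
definition B_h :: "disorder \<Rightarrow> (nat \<Rightarrow> real) \<Rightarrow> real" where
  "B_h \<omega> x = inner_N N x (fst \<omega>) - (norm_N N x)\<^sup>2 / 2"
definition R_h :: "real \<Rightarrow> disorder \<Rightarrow> (nat \<Rightarrow> real) \<Rightarrow> real" where
  "R_h t \<omega> x = sqrt (t / real N) * inner_N N x (matvec_N N (fst (snd \<omega>)) x)
     + t / real N * (inner_N N x (fst \<omega>))\<^sup>2 - t / (2 * real N) * (norm_N N x) ^ 4"
definition resample_z :: "nat \<Rightarrow> disorder \<Rightarrow> real \<Rightarrow> disorder" where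
  "resample_z i \<omega> w = (fst \<omega>, (fst (snd \<omega>), (snd (snd \<omega>))(i := w)))"
definition c_R_h :: "real \<Rightarrow> disorder \<Rightarrow> real" where
  "c_R_h t \<omega> = sqrt (t / real N) * K\<^sup>2 * (\<Sum>p\<in>Jt. \<bar>fst (snd \<omega>) (fst p) (snd p)\<bar>) + 3/2 * t * real N * K^4"

lemma abs_B_t_le:
  fixes M :: real
  assumes x: "\<forall>i<N. \<bar>x i\<bar> \<le> M" and y: "\<forall>i<N. \<bar>fst \<omega> i\<bar> \<le> M"
  shows "\<bar>B_t \<omega> x\<bar> \<le> 3/2 * real N * M^4"
proof -
  have i: "\<bar>inner_N N x (fst \<omega>)\<bar> \<le> real N * M\<^sup>2" by (rule abs_inner_N_le_bounded[OF x y])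
  have "(inner_N N x (fst \<omega>))\<^sup>2 \<le> (real N * M\<^sup>2)\<^sup>2" by (rule square_le_if_abs_le[OF i])
  then have a1: "(inner_N N x (fst \<omega>))\<^sup>2 / real N \<le> real N * M^4"
    using N_pos by (simp add: divide_le_eq power2_eq_square power4_eq_xxxx ac_simps)
  have "(norm_N N x)^4 / (2 * real N) \<le> (real N * M\<^sup>2)\<^sup>2 / (2 * real N)"
    by (rule divide_right_mono[OF norm_N_pow4_le[OF x]]) simp
  also have "\<dots> = real N * M^4 / 2" using N_pos by (simp add: power2_eq_square power4_eq_xxxx)
  finally have a2: "(norm_N N x)^4 / (2 * real N) \<le> real N * M^4 / 2" .
  have p1: "0 \<le> (inner_N N x (fst \<omega>))\<^sup>2 / real N" by simp
  have p2: "0 \<le> (norm_N N x)^4 / (2 * real N)" using norm_N_nonneg[of N x] by simp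
  have p3: "0 \<le> real N * M^4" by simp
  show ?thesis unfolding B_t_def
  proof (rule abs_leI)
    show "(inner_N N x (fst \<omega>))\<^sup>2 / real N - (norm_N N x)^4 / (2 * real N) \<le> 3/2 * real N * M^4"
      using a1 p2 p3 by linarith
    show "- ((inner_N N x (fst \<omega>))\<^sup>2 / real N - (norm_N N x)^4 / (2 * real N)) \<le> 3/2 * real N * M^4"
      using a2 p1 p3 by linarith
  qed
qed

lemma abs_R_t_le:
  fixes M :: real
  assumes h: "0 \<le> h" and x: "\<forall>i<N. \<bar>x i\<bar> \<le> M" and y: "\<forall>i<N. \<bar>fst \<omega> i\<bar> \<le> M"
  shows "\<bar>R_t h \<omega> x\<bar> \<le> sqrt h * M * (\<Sum>i<N. \<bar>snd (snd \<omega>) i\<bar>) + 3/2 * h * real N * M\<^sup>2"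
proof -
  have "\<bar>inner_N N (snd (snd \<omega>)) x\<bar> \<le> M * (\<Sum>i<N. \<bar>snd (snd \<omega>) i\<bar>)"
    using abs_inner_N_le_sum_abs[OF x, of "snd (snd \<omega>)"] by (simp add: inner_N_commute)
  then have a1: "\<bar>sqrt h * inner_N N (snd (snd \<omega>)) x\<bar> \<le> sqrt h * M * (\<Sum>i<N. \<bar>snd (snd \<omega>) i\<bar>)"
    using h by (simp add: abs_mult mult_left_mono mult.assoc)
  have "\<bar>inner_N N x (fst \<omega>)\<bar> \<le> real N * M\<^sup>2" by (rule abs_inner_N_le_bounded[OF x y])
  then have a2: "\<bar>h * inner_N N x (fst \<omega>)\<bar> \<le> h * (real N * M\<^sup>2)"
    using h by (simp add: abs_mult mult_left_mono)
  have "(norm_N N x)\<^sup>2 \<le> real N * M\<^sup>2" by (rule norm_N_square_le[OF x])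
  then have a3: "\<bar>h / 2 * (norm_N N x)\<^sup>2\<bar> \<le> h / 2 * (real N * M\<^sup>2)"
    using h by (simp add: abs_mult mult_left_mono)
  have "\<bar>R_t h \<omega> x\<bar> \<le> \<bar>sqrt h * inner_N N (snd (snd \<omega>)) x\<bar> + \<bar>h * inner_N N x (fst \<omega>)\<bar> + \<bar>h / 2 * (norm_N N x)\<^sup>2\<bar>"
    unfolding R_t_def by linarith
  also have "\<dots> \<le> sqrt h * M * (\<Sum>i<N. \<bar>snd (snd \<omega>) i\<bar>) + 3/2 * h * real N * M\<^sup>2" using a1 a2 a3 by (simp add: algebra_simps)
  finally show ?thesis .
qed

lemma abs_B_h_le:
  fixes M :: real
  assumes x: "\<forall>i<N. \<bar>x i\<bar> \<le> M" and y: "\<forall>i<N. \<bar>fst \<omega> i\<bar> \<le> M"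
  shows "\<bar>B_h \<omega> x\<bar> \<le> 3/2 * real N * M\<^sup>2"
proof -
  have i: "\<bar>inner_N N x (fst \<omega>)\<bar> \<le> real N * M\<^sup>2" by (rule abs_inner_N_le_bounded[OF x y])
  have n: "(norm_N N x)\<^sup>2 \<le> real N * M\<^sup>2" by (rule norm_N_square_le[OF x])
  have n0: "0 \<le> (norm_N N x)\<^sup>2" by simp
  have i1: "inner_N N x (fst \<omega>) \<le> real N * M\<^sup>2" "- inner_N N x (fst \<omega>) \<le> real N * M\<^sup>2" using i by auto
  show ?thesis unfolding B_h_def
    by (rule abs_leI) (use i1 n n0 in linarith)+
qed

lemma abs_R_h_le:
  fixes M :: real
  assumes t: "0 \<le> t" and x: "\<forall>i<N. \<bar>x i\<bar> \<le> M" and y: "\<forall>i<N. \<bar>fst \<omega> i\<bar> \<le> M"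
  shows "\<bar>R_h t \<omega> x\<bar> \<le> sqrt (t / real N) * M\<^sup>2 * (\<Sum>p\<in>Jt. \<bar>fst (snd \<omega>) (fst p) (snd p)\<bar>) + 3/2 * t * real N * M^4"
proof -
  have q: "\<bar>inner_N N x (matvec_N N (fst (snd \<omega>)) x)\<bar> \<le> M\<^sup>2 * (\<Sum>p\<in>Jt. \<bar>fst (snd \<omega>) (fst p) (snd p)\<bar>)"
    by (rule abs_quadratic_form_le_sum_abs[OF x])
  have a1: "\<bar>sqrt (t / real N) * inner_N N x (matvec_N N (fst (snd \<omega>)) x)\<bar> \<le> sqrt (t / real N) * M\<^sup>2 * (\<Sum>p\<in>Jt. \<bar>fst (snd \<omega>) (fst p) (snd p)\<bar>)"
  proof -
    have st: "0 \<le> sqrt (t / real N)" using t by simp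
    have "\<bar>sqrt (t / real N) * inner_N N x (matvec_N N (fst (snd \<omega>)) x)\<bar> = sqrt (t / real N) * \<bar>inner_N N x (matvec_N N (fst (snd \<omega>)) x)\<bar>"
      using st by (simp add: abs_mult)
    also have "\<dots> \<le> sqrt (t / real N) * (M\<^sup>2 * (\<Sum>p\<in>Jt. \<bar>fst (snd \<omega>) (fst p) (snd p)\<bar>))"
      by (rule mult_left_mono[OF q st])
    finally show ?thesis by (simp add: mult.assoc)
  qed
  have i: "\<bar>inner_N N x (fst \<omega>)\<bar> \<le> real N * M\<^sup>2" by (rule abs_inner_N_le_bounded[OF x y])
  have "(inner_N N x (fst \<omega>))\<^sup>2 \<le> (real N * M\<^sup>2)\<^sup>2" by (rule square_le_if_abs_le[OF i])
  then have "t / real N * (inner_N N x (fst \<omega>))\<^sup>2 \<le> t / real N * (real N * M\<^sup>2)\<^sup>2"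
    by (rule mult_left_mono) (use t in simp)
  also have "\<dots> = t * real N * M^4" using N_pos by (simp add: power2_eq_square power4_eq_xxxx)
  finally have a2: "t / real N * (inner_N N x (fst \<omega>))\<^sup>2 \<le> t * real N * M^4" .
  have "t / (2 * real N) * (norm_N N x) ^ 4 \<le> t / (2 * real N) * (real N * M\<^sup>2)\<^sup>2"
    by (rule mult_left_mono[OF norm_N_pow4_le[OF x]]) (use t in simp)
  also have "\<dots> = t * real N * M^4 / 2" using N_pos by (simp add: power2_eq_square power4_eq_xxxx)
  finally have a3: "t / (2 * real N) * (norm_N N x) ^ 4 \<le> t * real N * M^4 / 2" .
  have p2: "0 \<le> t / real N * (inner_N N x (fst \<omega>))\<^sup>2" using t by simp
  have p3: "0 \<le> t / (2 * real N) * (norm_N N x) ^ 4" using t norm_N_nonneg[of N x] by simp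
  have b1: "sqrt (t / real N) * inner_N N x (matvec_N N (fst (snd \<omega>)) x) \<le> sqrt (t / real N) * M\<^sup>2 * (\<Sum>p\<in>Jt. \<bar>fst (snd \<omega>) (fst p) (snd p)\<bar>)"
    "- (sqrt (t / real N) * inner_N N x (matvec_N N (fst (snd \<omega>)) x)) \<le> sqrt (t / real N) * M\<^sup>2 * (\<Sum>p\<in>Jt. \<bar>fst (snd \<omega>) (fst p) (snd p)\<bar>)"
    using a1 by linarith+
  show ?thesis unfolding R_h_def
    by (rule abs_leI) (use b1 a2 a3 p2 p3 in linarith)+
qed

lemma gaussian_disorder_t:
  assumes h: "0 \<le> h"
  shows "gaussian_disorder Om PN N Jt W_entry spin_pair B_t (R_t h) resample_W
    (K\<^sup>2 / sqrt (real N)) (3/2 * real N * K^4) (c_R_t h)"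
proof (rule gaussian_disorder.intro)
  show "W_entry k \<in> borel_measurable Om" for k unfolding W_entry_def by measurable
  show "spin_pair k \<in> borel_measurable PN" for k unfolding spin_pair_def by measurable
  show "(\<lambda>p. B_t (fst p) (snd p)) \<in> borel_measurable (Om \<Otimes>\<^sub>M PN)" unfolding B_t_def inner_N_def norm_N_def by measurable
  show "(\<lambda>p. R_t h (fst p) (snd p)) \<in> borel_measurable (Om \<Otimes>\<^sub>M PN)" unfolding R_t_def inner_N_def norm_N_def by measurable
  show "B_t \<omega> \<in> borel_measurable PN" for \<omega> unfolding B_t_def inner_N_def norm_N_def by measurable
  show "R_t h \<omega> \<in> borel_measurable PN" for \<omega> unfolding R_t_def inner_N_def norm_N_def by measurable
  show "AE x in PN. \<bar>spin_pair k x\<bar> \<le> K\<^sup>2 / sqrt (real N)" if k: "k \<in> Jt" for k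
    using AE_PN_bounded
  proof eventually_elim
    case (elim x)
    have "\<bar>x (fst k) * x (snd k)\<bar> \<le> K * K" unfolding abs_mult by (rule mult_mono) (use k elim in auto)
    then show ?case unfolding spin_pair_def using N_pos by (simp add: abs_divide divide_right_mono power2_eq_square)
  qed
  show "\<exists>b. AE x in PN. \<bar>B_t \<omega> x\<bar> \<le> b" for \<omega>
    by (rule ex_AE_bound[of "fst \<omega>"]) (rule abs_B_t_le)
  show "\<exists>r. AE x in PN. \<bar>R_t h \<omega> x\<bar> \<le> r" for \<omega>
    by (rule ex_AE_bound[of "fst \<omega>"]) (rule abs_R_t_le[OF h])
  show "AE \<omega> in Om. AE x in PN. \<bar>B_t \<omega> x\<bar> \<le> 3/2 * real N * K^4"
    by (rule AE_AE_bound) (rule abs_B_t_le)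
  show "AE \<omega> in Om. AE x in PN. \<bar>R_t h \<omega> x\<bar> \<le> c_R_t h \<omega>"
    unfolding c_R_t_def by (rule AE_AE_bound) (rule abs_R_t_le[OF h])
  show "integrable Om (c_R_t h)"
  proof -
    interpret prob_space Om by (rule prob_Om)
    have "integrable Om (\<lambda>\<omega>. \<Sum>i<N. \<bar>snd (snd \<omega>) i\<bar>)"
      by (intro Bochner_Integration.integrable_sum integrable_abs integrable_z) simp
    then show ?thesis unfolding c_R_t_def by simp
  qed
  show "resampling Om gauss (resample_W k)" if "k \<in> Jt" for k
    using resampling_W[of "fst k" "snd k"] that unfolding resample_W_def by (auto simp: mem_Times_iff)
  show "W_entry l (resample_W k \<omega> w) = W_entry l \<omega>" if "l \<noteq> k" for k l w \<omega>
    using that unfolding W_entry_def resample_W_def by (cases k, cases l) auto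
qed (use prob_Om prob_PN N_pos in \<open>auto simp: W_entry_def B_t_def R_t_def resample_W_def\<close>)

lemma gaussian_disorder_h:
  assumes t: "0 \<le> t"
  shows "gaussian_disorder Om PN N {..<N} z_entry spin B_h (R_h t) resample_z K (3/2 * real N * K\<^sup>2) (c_R_h t)"
proof (rule gaussian_disorder.intro)
  show "z_entry k \<in> borel_measurable Om" for k unfolding z_entry_def by measurable
  show "spin k \<in> borel_measurable PN" for k unfolding spin_def by measurable
  show "(\<lambda>p. B_h (fst p) (snd p)) \<in> borel_measurable (Om \<Otimes>\<^sub>M PN)" unfolding B_h_def inner_N_def norm_N_def by measurable
  show "(\<lambda>p. R_h t (fst p) (snd p)) \<in> borel_measurable (Om \<Otimes>\<^sub>M PN)" unfolding R_h_def inner_N_def norm_N_def matvec_N_def by measurable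
  show "B_h \<omega> \<in> borel_measurable PN" for \<omega> unfolding B_h_def inner_N_def norm_N_def by measurable
  show "R_h t \<omega> \<in> borel_measurable PN" for \<omega> unfolding R_h_def inner_N_def norm_N_def matvec_N_def by measurable
  show "AE x in PN. \<bar>spin k x\<bar> \<le> K" if "k \<in> {..<N}" for k
    using AE_PN_bounded by eventually_elim (use that in \<open>auto simp: spin_def\<close>)
  show "\<exists>b. AE x in PN. \<bar>B_h \<omega> x\<bar> \<le> b" for \<omega>
    by (rule ex_AE_bound[of "fst \<omega>"]) (rule abs_B_h_le)
  show "\<exists>r. AE x in PN. \<bar>R_h t \<omega> x\<bar> \<le> r" for \<omega>
    by (rule ex_AE_bound[of "fst \<omega>"]) (rule abs_R_h_le[OF t])
  show "AE \<omega> in Om. AE x in PN. \<bar>B_h \<omega> x\<bar> \<le> 3/2 * real N * K\<^sup>2"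
    by (rule AE_AE_bound) (rule abs_B_h_le)
  show "AE \<omega> in Om. AE x in PN. \<bar>R_h t \<omega> x\<bar> \<le> c_R_h t \<omega>"
    unfolding c_R_h_def by (rule AE_AE_bound) (rule abs_R_h_le[OF t])
  show "integrable Om (c_R_h t)"
  proof -
    interpret prob_space Om by (rule prob_Om)
    have "integrable Om (\<lambda>\<omega>. \<Sum>p\<in>Jt. \<bar>fst (snd \<omega>) (fst p) (snd p)\<bar>)"
      by (intro Bochner_Integration.integrable_sum integrable_abs integrable_W) auto
    then show ?thesis unfolding c_R_h_def by simp
  qed
  show "resampling Om gauss (resample_z k)" if "k \<in> {..<N}" for k
    using resampling_z[of k] that unfolding resample_z_def by auto
qed (use prob_Om prob_PN N_pos in \<open>auto simp: z_entry_def B_h_def R_h_def resample_z_def\<close>)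

lemma F_N_eq_log_partition_t:
  assumes "0 \<le> s"
  shows "F_N P N s h \<omega> = ln (partition_fn PN (A_t \<omega>) (B_t \<omega>) (R_t h \<omega>) (sqrt s)) / real N"
proof -
  have "sqrt (s / real N) = sqrt s / sqrt (real N)" by (simp add: real_sqrt_divide)
  then have "H_N N s h xbar W z x = sqrt s * A_t (xbar, W, z) x + (sqrt s)\<^sup>2 * B_t (xbar, W, z) x
      + R_t h (xbar, W, z) x" for xbar W z x
    using assms unfolding H_N_def A_t_def B_t_def R_t_def by (simp add: algebra_simps)
  then show ?thesis
    unfolding F_N_def partition_fn_def gibbs_weight_def by (simp split: prod.split)
qed

lemma F_N_eq_log_partition_h:
  assumes "0 \<le> s"
  shows "F_N P N t s \<omega> = ln (partition_fn PN (A_h \<omega>) (B_h \<omega>) (R_h t \<omega>) (sqrt s)) / real N"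
proof -
  have "H_N N t s xbar W z x = sqrt s * A_h (xbar, W, z) x + (sqrt s)\<^sup>2 * B_h (xbar, W, z) x
      + R_h t (xbar, W, z) x" for xbar W z x
    using assms unfolding H_N_def A_h_def B_h_def R_h_def inner_N_def by (simp add: algebra_simps)
  then show ?thesis
    unfolding F_N_def partition_fn_def gibbs_weight_def by (simp split: prod.split)
qed

lemma deriv_bound_ge: "3/2 * K^4 \<le> deriv_bound K" "3/2 * K\<^sup>2 \<le> deriv_bound K"
  "K\<^sup>2 / 2 \<le> deriv_bound K" "K / 2 \<le> deriv_bound K" "K / 4 \<le> deriv_bound K"
  using K_nonneg zero_le_power2[of K] zero_le_power[OF K_nonneg, of 4]
  unfolding deriv_bound_def by linarith+

lemma Fbar_N_t_has_derivative:
  assumes "0 \<le> t" "0 \<le> h"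
  obtains D where "((\<lambda>s. Fbar_N P N s h) has_real_derivative D) (at t within {0..})" "\<bar>D\<bar> \<le> 2 * K^4"
proof -
  interpret gaussian_disorder Om PN N Jt W_entry spin_pair B_t "R_t h" resample_W
      "K\<^sup>2 / sqrt (real N)" "3/2 * real N * K^4" "c_R_t h"
    by (rule gaussian_disorder_t[OF assms(2)])
  have A_eq: "A = A_t"
    by (simp add: fun_eq_iff A_def A_t_def W_entry_def spin_pair_def quadratic_form_eq_sum sum_divide_distrib)
  have Fbar: "Fbar_N P N s h = Phi (sqrt s)" if "0 \<le> s" for s
  proof -
    have "F_N P N s h = (\<lambda>\<omega>. psi \<omega> (sqrt s))"
      using F_N_eq_log_partition_t[OF that] by (simp add: fun_eq_iff psi_def A_eq)
    then show ?thesis unfolding Fbar_N_def Phi_def by simp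
  qed
  obtain D where D: "((\<lambda>s. Phi (sqrt s)) has_real_derivative D) (at t within {0..})" "\<bar>D\<bar> \<le> c_Phi / 2"
    by (rule Phi_sqrt_has_derivative[OF assms(1)])
  have "((\<lambda>s. Fbar_N P N s h) has_real_derivative D) (at t within {0..})"
    by (rule has_field_derivative_transform_within[OF D(1) zero_less_one]) (use assms(1) Fbar in auto)
  moreover have "c_Phi / 2 = 2 * K^4"
    using N_pos by (simp add: power_divide power2_eq_square power4_eq_xxxx field_simps)
  ultimately show ?thesis using that D(2) by simp
qed

lemma Fbar_N_h_has_derivative:
  assumes "0 \<le> t" "0 \<le> h"
  obtains D where "((\<lambda>s. Fbar_N P N t s) has_real_derivative D) (at h within {0..})" "\<bar>D\<bar> \<le> 2 * K\<^sup>2"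
proof -
  interpret gaussian_disorder Om PN N "{..<N}" z_entry spin B_h "R_h t" resample_z K "3/2 * real N * K\<^sup>2" "c_R_h t"
    by (rule gaussian_disorder_h[OF assms(1)])
  have A_eq: "A = A_h"
    by (simp add: fun_eq_iff A_def A_h_def z_entry_def spin_def inner_N_def)
  have Fbar: "Fbar_N P N t s = Phi (sqrt s)" if "0 \<le> s" for s
  proof -
    have "F_N P N t s = (\<lambda>\<omega>. psi \<omega> (sqrt s))"
      using F_N_eq_log_partition_h[OF that] by (simp add: fun_eq_iff psi_def A_eq)
    then show ?thesis unfolding Fbar_N_def Phi_def by simp
  qed
  obtain D where D: "((\<lambda>s. Phi (sqrt s)) has_real_derivative D) (at h within {0..})" "\<bar>D\<bar> \<le> c_Phi / 2"
    by (rule Phi_sqrt_has_derivative[OF assms(2)])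
  have "((\<lambda>s. Fbar_N P N t s) has_real_derivative D) (at h within {0..})"
    by (rule has_field_derivative_transform_within[OF D(1) zero_less_one]) (use assms(2) Fbar in auto)
  moreover have "c_Phi / 2 = 2 * K\<^sup>2"
    using N_pos by (simp add: field_simps)
  ultimately show ?thesis using that D(2) by simp
qed

lemma Fbar_N_derivatives:
  assumes "0 \<le> t" "0 \<le> h"
  shows "\<exists>Dt Dh. ((\<lambda>s. Fbar_N P N s h) has_real_derivative Dt) (at t within {0..})
    \<and> ((\<lambda>s. Fbar_N P N t s) has_real_derivative Dh) (at h within {0..})
    \<and> \<bar>Dt\<bar> + \<bar>Dh\<bar> \<le> deriv_bound K"
proof -
  obtain Dt Dh where "((\<lambda>s. Fbar_N P N s h) has_real_derivative Dt) (at t within {0..})" "\<bar>Dt\<bar> \<le> 2 * K^4"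
    and "((\<lambda>s. Fbar_N P N t s) has_real_derivative Dh) (at h within {0..})" "\<bar>Dh\<bar> \<le> 2 * K\<^sup>2"
    using Fbar_N_t_has_derivative[OF assms] Fbar_N_h_has_derivative[OF assms] by metis
  moreover have "2 * K^4 + 2 * K\<^sup>2 \<le> deriv_bound K" using K_nonneg by (simp add: deriv_bound_def)
  ultimately show ?thesis by fastforce
qed

lemma abs_A_t_le:
  assumes "\<forall>i<N. \<bar>x i\<bar> \<le> K"
  shows "\<bar>A_t \<omega> x\<bar> \<le> K\<^sup>2 * sqrt (real N) * opnorm_N N (fst (snd \<omega>))"
proof -
  have "\<bar>inner_N N x (matvec_N N (fst (snd \<omega>)) x)\<bar> \<le> opnorm_N N (fst (snd \<omega>)) * (norm_N N x)\<^sup>2"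
    by (rule abs_quadratic_form_le_opnorm)
  also have "\<dots> \<le> opnorm_N N (fst (snd \<omega>)) * (real N * K\<^sup>2)"
    by (rule mult_left_mono[OF norm_N_square_le[OF assms] opnorm_N_nonneg])
  finally have "\<bar>inner_N N x (matvec_N N (fst (snd \<omega>)) x)\<bar> / sqrt (real N)
      \<le> opnorm_N N (fst (snd \<omega>)) * (real N * K\<^sup>2) / sqrt (real N)"
    by (rule divide_right_mono) simp
  then have "\<bar>A_t \<omega> x\<bar> \<le> opnorm_N N (fst (snd \<omega>)) * (real N * K\<^sup>2) / sqrt (real N)"
    unfolding A_t_def by (simp add: abs_divide)
  also have "\<dots> = K\<^sup>2 * sqrt (real N) * opnorm_N N (fst (snd \<omega>))"
    using N_pos by (simp add: field_simps)
  finally show ?thesis .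
qed

lemma abs_A_h_le:
  assumes "\<forall>i<N. \<bar>x i\<bar> \<le> K"
  shows "\<bar>A_h \<omega> x\<bar> \<le> K * sqrt (real N) * norm_N N (snd (snd \<omega>))"
proof -
  have "\<bar>A_h \<omega> x\<bar> \<le> norm_N N (snd (snd \<omega>)) * norm_N N x"
    unfolding A_h_def by (rule abs_inner_N_le)
  also have "\<dots> \<le> norm_N N (snd (snd \<omega>)) * (sqrt (real N) * K)"
    by (rule mult_left_mono[OF norm_N_le[OF assms] norm_N_nonneg])
  finally show ?thesis by (simp add: ac_simps)
qed

lemma gibbs_family_t:
  assumes "\<forall>i<N. \<bar>fst \<omega> i\<bar> \<le> K" "0 \<le> h"
  shows "\<exists>r. gibbs_family PN (A_t \<omega>) (B_t \<omega>) (R_t h \<omega>)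
    (K\<^sup>2 * sqrt (real N) * opnorm_N N (fst (snd \<omega>))) (3/2 * real N * K^4) r"
proof -
  have "AE x in PN. \<bar>A_t \<omega> x\<bar> \<le> K\<^sup>2 * sqrt (real N) * opnorm_N N (fst (snd \<omega>))"
    using AE_PN_bounded by eventually_elim (rule abs_A_t_le)
  moreover have "AE x in PN. \<bar>B_t \<omega> x\<bar> \<le> 3/2 * real N * K^4"
    using AE_PN_bounded by eventually_elim (rule abs_B_t_le[OF _ assms(1)])
  moreover have "\<exists>r. AE x in PN. \<bar>R_t h \<omega> x\<bar> \<le> r"
    by (rule ex_AE_bound[of "fst \<omega>"]) (rule abs_R_t_le[OF assms(2)])
  moreover have "A_t \<omega> \<in> borel_measurable PN" "B_t \<omega> \<in> borel_measurable PN" "R_t h \<omega> \<in> borel_measurable PN"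
    unfolding A_t_def B_t_def R_t_def inner_N_def norm_N_def matvec_N_def by measurable
  ultimately show ?thesis
    unfolding gibbs_family_def gibbs_family_axioms_def using prob_PN by blast
qed

lemma gibbs_family_h:
  assumes "\<forall>i<N. \<bar>fst \<omega> i\<bar> \<le> K" "0 \<le> t"
  shows "\<exists>r. gibbs_family PN (A_h \<omega>) (B_h \<omega>) (R_h t \<omega>)
    (K * sqrt (real N) * norm_N N (snd (snd \<omega>))) (3/2 * real N * K\<^sup>2) r"
proof -
  have "AE x in PN. \<bar>A_h \<omega> x\<bar> \<le> K * sqrt (real N) * norm_N N (snd (snd \<omega>))"
    using AE_PN_bounded by eventually_elim (rule abs_A_h_le)
  moreover have "AE x in PN. \<bar>B_h \<omega> x\<bar> \<le> 3/2 * real N * K\<^sup>2"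
    using AE_PN_bounded by eventually_elim (rule abs_B_h_le[OF _ assms(1)])
  moreover have "\<exists>r. AE x in PN. \<bar>R_h t \<omega> x\<bar> \<le> r"
    by (rule ex_AE_bound[of "fst \<omega>"]) (rule abs_R_h_le[OF assms(2)])
  moreover have "A_h \<omega> \<in> borel_measurable PN" "B_h \<omega> \<in> borel_measurable PN" "R_h t \<omega> \<in> borel_measurable PN"
    unfolding A_h_def B_h_def R_h_def inner_N_def norm_N_def matvec_N_def by measurable
  ultimately show ?thesis
    unfolding gibbs_family_def gibbs_family_axioms_def using prob_PN by blast
qed

lemma F_N_t_has_derivative:
  fixes t h :: real
  assumes xbar: "\<forall>i<N. \<bar>xbar i\<bar> \<le> K" and t: "0 < t" and h: "0 \<le> h"
  shows "\<exists>D. ((\<lambda>s. F_N P N s h (xbar, W, z)) has_real_derivative D) (at t within {0..})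
    \<and> \<bar>D\<bar> \<le> deriv_bound K + deriv_bound K * opnorm_N N W / sqrt (N * t)"
proof -
  define a where "a = K\<^sup>2 * sqrt (real N) * opnorm_N N W"
  obtain r where "gibbs_family PN (A_t (xbar, W, z)) (B_t (xbar, W, z)) (R_t h (xbar, W, z))
      a (3/2 * real N * K^4) r"
    using gibbs_family_t[of "(xbar, W, z)" h] xbar h unfolding a_def by auto
  then interpret gibbs_family PN "A_t (xbar, W, z)" "B_t (xbar, W, z)" "R_t h (xbar, W, z)"
    a "3/2 * real N * K^4" r .
  note d = scaled_log_partition_sqrt_derivatives[OF F_N_eq_log_partition_t N_pos t]
  have "(a / (2 * sqrt t) + 3/2 * real N * K^4) / real N = 3/2 * K^4 + K\<^sup>2 / 2 * (opnorm_N N W / sqrt (N * t))"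
  proof -
    have "sqrt (real N * t) = sqrt (real N) * sqrt t" by (simp add: real_sqrt_mult)
    moreover have "real N = sqrt (real N) * sqrt (real N)" by simp
    ultimately show ?thesis unfolding a_def using t N_pos by (simp add: field_simps)
  qed
  also have "\<dots> \<le> deriv_bound K + deriv_bound K * (opnorm_N N W / sqrt (N * t))"
    using deriv_bound_ge opnorm_N_nonneg[of N W] t
    by (intro add_mono mult_right_mono) simp_all
  finally have "\<bar>L (sqrt t) / (2 * sqrt t) / real N\<bar> \<le> deriv_bound K + deriv_bound K * opnorm_N N W / sqrt (N * t)"
    using d(2) unfolding times_divide_eq_right by linarith
  then show ?thesis using has_field_derivative_at_within[OF d(1)] by blast
qed

lemma F_N_h_derivatives:
  fixes t h :: real
  assumes xbar: "\<forall>i<N. \<bar>xbar i\<bar> \<le> K" and t: "0 \<le> t" and h: "0 < h"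
  shows "\<exists>D. ((\<lambda>s. F_N P N t s (xbar, W, z)) has_real_derivative D) (at h within {0..})
      \<and> \<bar>D\<bar> \<le> deriv_bound K + deriv_bound K * norm_N N z / sqrt (N * h)"
    and "\<exists>D2. (deriv (\<lambda>s. F_N P N t s (xbar, W, z)) has_real_derivative D2) (at h)
      \<and> D2 \<ge> - (deriv_bound K * norm_N N z / (sqrt N * h powr (3/2)))"
proof -
  define a where "a = K * sqrt (real N) * norm_N N z"
  obtain r where "gibbs_family PN (A_h (xbar, W, z)) (B_h (xbar, W, z)) (R_h t (xbar, W, z))
      a (3/2 * real N * K\<^sup>2) r"
    using gibbs_family_h[of "(xbar, W, z)" t] xbar t unfolding a_def by auto
  then interpret gibbs_family PN "A_h (xbar, W, z)" "B_h (xbar, W, z)" "R_h t (xbar, W, z)"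
    a "3/2 * real N * K\<^sup>2" r .
  note d = scaled_log_partition_sqrt_derivatives[OF F_N_eq_log_partition_h N_pos h]
  have sN: "0 < sqrt (real N)" using N_pos by simp
  have sNh: "sqrt (real N * h) = sqrt (real N) * sqrt h" by (simp add: real_sqrt_mult)
  have NN: "real N = sqrt (real N) * sqrt (real N)" by simp
  have "(a / (2 * sqrt h) + 3/2 * real N * K\<^sup>2) / real N = 3/2 * K\<^sup>2 + K / 2 * (norm_N N z / sqrt (N * h))"
    unfolding a_def sNh using h sN by (subst (1 2) NN) (simp add: field_simps)
  also have "\<dots> \<le> deriv_bound K + deriv_bound K * (norm_N N z / sqrt (N * h))"
    using deriv_bound_ge norm_N_nonneg[of N z] h
    by (intro add_mono mult_right_mono) simp_all
  finally have "\<bar>L (sqrt h) / (2 * sqrt h) / real N\<bar> \<le> deriv_bound K + deriv_bound K * norm_N N z / sqrt (N * h)"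
    using d(2) unfolding times_divide_eq_right by linarith
  then show "\<exists>D. ((\<lambda>s. F_N P N t s (xbar, W, z)) has_real_derivative D) (at h within {0..})
      \<and> \<bar>D\<bar> \<le> deriv_bound K + deriv_bound K * norm_N N z / sqrt (N * h)"
    using has_field_derivative_at_within[OF d(1)] by blast
  define X where "X = norm_N N z / (sqrt N * h powr (3/2))"
  have "0 \<le> X" unfolding X_def using norm_N_nonneg[of N z] h by simp
  have "- a / (4 * h powr (3/2)) / real N = - (K / 4 * X)"
    unfolding a_def X_def using h sN by (subst NN) (simp add: field_simps)
  moreover have "K / 4 * X \<le> deriv_bound K * X" by (rule mult_right_mono[OF deriv_bound_ge(5) \<open>0 \<le> X\<close>])
  ultimately have "- (deriv_bound K * X) \<le> - a / (4 * h powr (3/2)) / real N" by linarith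
  then show "\<exists>D2. (deriv (\<lambda>s. F_N P N t s (xbar, W, z)) has_real_derivative D2) (at h)
      \<and> D2 \<ge> - (deriv_bound K * norm_N N z / (sqrt N * h powr (3/2)))"
    using d(3) unfolding X_def times_divide_eq_right by (meson order_trans)
qed

lemma AE_F_N_derivatives:
  "AE \<omega> in Omega P N. case \<omega> of (xbar, W, z) \<Rightarrow>
      (\<forall>(t::real) (h::real). 0 < t \<longrightarrow> 0 \<le> h \<longrightarrow>
         (\<exists>D. ((\<lambda>s. F_N P N s h \<omega>) has_real_derivative D) (at t within {0..})
              \<and> \<bar>D\<bar> \<le> deriv_bound K + deriv_bound K * opnorm_N N W / sqrt (N * t)))
    \<and> (\<forall>(t::real) (h::real). 0 \<le> t \<longrightarrow> 0 < h \<longrightarrow>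
         (\<exists>D. ((\<lambda>s. F_N P N t s \<omega>) has_real_derivative D) (at h within {0..})
              \<and> \<bar>D\<bar> \<le> deriv_bound K + deriv_bound K * norm_N N z / sqrt (N * h)))
    \<and> (\<forall>(t::real) (h::real). 0 \<le> t \<longrightarrow> 0 < h \<longrightarrow>
         (\<exists>D2. (deriv (\<lambda>s. F_N P N t s \<omega>) has_real_derivative D2) (at h)
              \<and> D2 \<ge> - (deriv_bound K * norm_N N z / (sqrt N * h powr (3/2)))))"
  using AE_xbar_bounded
proof eventually_elim
  case (elim \<omega>)
  obtain xbar W z where \<omega>: "\<omega> = (xbar, W, z)" by (cases \<omega>) auto
  have xbar: "\<forall>i<N. \<bar>xbar i\<bar> \<le> K" using elim \<omega> by simp
  show ?case
    unfolding \<omega> using F_N_t_has_derivative[OF xbar] F_N_h_derivatives[OF xbar] by simp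
qed

end

theorem lemma3p1:
  fixes P :: "real measure"
  assumes "prob_space P"
    and "sets P = sets borel"
    and "\<exists>K. AE x in P. \<bar>x\<bar> \<le> K"
  shows "\<exists>C::real. \<forall>N::nat. N \<ge> 1 \<longrightarrow>
     (\<forall>(t::real) (h::real). 0 \<le> t \<longrightarrow> 0 \<le> h \<longrightarrow>
        (\<exists>Dt Dh. ((\<lambda>s. Fbar_N P N s h) has_real_derivative Dt) (at t within {0..})
               \<and> ((\<lambda>s. Fbar_N P N t s) has_real_derivative Dh) (at h within {0..})
               \<and> \<bar>Dt\<bar> + \<bar>Dh\<bar> \<le> C))
   \<and> (AE \<omega> in Omega P N. case \<omega> of (xbar, W, z) \<Rightarrow>
        (\<forall>(t::real) (h::real). 0 < t \<longrightarrow> 0 \<le> h \<longrightarrow>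
           (\<exists>D. ((\<lambda>s. F_N P N s h \<omega>) has_real_derivative D) (at t within {0..})
                \<and> \<bar>D\<bar> \<le> C + C * opnorm_N N W / sqrt (N * t)))
      \<and> (\<forall>(t::real) (h::real). 0 \<le> t \<longrightarrow> 0 < h \<longrightarrow>
           (\<exists>D. ((\<lambda>s. F_N P N t s \<omega>) has_real_derivative D) (at h within {0..})
                \<and> \<bar>D\<bar> \<le> C + C * norm_N N z / sqrt (N * h)))
      \<and> (\<forall>(t::real) (h::real). 0 \<le> t \<longrightarrow> 0 < h \<longrightarrow>
           (\<exists>D2. (deriv (\<lambda>s. F_N P N t s \<omega>) has_real_derivative D2) (at h)
                \<and> D2 \<ge> - (C * norm_N N z / (sqrt N * h powr (3/2))))))"
proof -
  obtain K where K: "AE x in P. \<bar>x\<bar> \<le> K" using assms(3) by blast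
  have model: "spiked_wigner P N K" if "1 \<le> N" for N
    unfolding spiked_wigner_def using assms(1,2) K that by blast
  show ?thesis
    by (rule exI[of _ "deriv_bound K"], intro allI impI conjI)
      (blast intro: spiked_wigner.Fbar_N_derivatives[OF model] spiked_wigner.AE_F_N_derivatives[OF model])+
qed

end
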